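(* Let $T>0$, $0<\eta<T$, $0<\alpha<\frac{1}{\eta}$, let $f\in C([0,\infty),[0,\infty))$, and let $a\in C([0,T],[0,\infty))$ with $a(t_0)>0$ for some $t_0\in[0,T]$. Consider the boundary value problem \[ u''(t)+a(t)f(u(t))=0,\quad 0<t<T,\qquad u'(0)=0,\quad u(T)=\alpha\int_0^{\eta}u(s)\,ds. \tag{P} \] Assume that $f_0=f_\infty=0$, and that there exist constants $\rho_2>0$ and $M_2\in[\Lambda_2,\infty)$ such that $f(u)\ge M_2\rho_2$ for all $u\in[\gamma\rho_2,\rho_2]$. Then (P) has at least two positive solutions $u_1,u_2$ with \[ 0<\|u_1\|<\rho_2<\|u_2\|. \]
   Context: $f_0=\lim_{u\to0^+}\frac{f(u)}{u}$, $f_\infty=\lim_{u\to\infty}\frac{f(u)}{u}$. $\|u\|=\max_{t\in[0,T]}|u(t)|$. $\gamma=\dfrac{\alpha\eta(T-\eta)}{T-\alpha\eta^2}$ and $\Lambda_2=\dfrac{1-\alpha\eta}{\gamma\left(\int_\eta^T (T-s)a(s)\,ds+\frac12\int_0^\eta\left[2(T-\eta)+\alpha(\eta^2-s^2)\right]a(s)\,ds\right)}$. A positive solution of (P) is a function $u\in C^2([0,T])$ satisfying (P) with $u(t)\ge0$ on $[0,T]$ and $u$ not identically zero. *)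

theory Defs
  imports "HOL-Analysis.Analysis"
begin

definition C2_with :: "real \<Rightarrow> (real \<Rightarrow> real) \<Rightarrow> (real \<Rightarrow> real) \<Rightarrow> (real \<Rightarrow> real) \<Rightarrow> bool" where
  "C2_with T u u1 u2 \<longleftrightarrow>
     (\<forall>t\<in>{0..T}. (u has_real_derivative u1 t) (at t within {0..T})) \<and>
     (\<forall>t\<in>{0..T}. (u1 has_real_derivative u2 t) (at t within {0..T})) \<and>
     continuous_on {0..T} u2"

definition pos_solution ::
  "real \<Rightarrow> real \<Rightarrow> real \<Rightarrow> (real \<Rightarrow> real) \<Rightarrow> (real \<Rightarrow> real) \<Rightarrow> (real \<Rightarrow> real) \<Rightarrow> bool" where
  "pos_solution T \<eta> \<alpha> a f u \<longleftrightarrow>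
     (\<exists>u1 u2. C2_with T u u1 u2 \<and>
        (\<forall>t\<in>{0<..<T}. u2 t + a t * f (u t) = 0) \<and>
        u1 0 = 0 \<and>
        u T = \<alpha> * integral {0..\<eta>} u) \<and>
     (\<forall>t\<in>{0..T}. u t \<ge> 0) \<and> (\<exists>t\<in>{0..T}. u t \<noteq> 0)"

definition supnorm :: "real \<Rightarrow> (real \<Rightarrow> real) \<Rightarrow> real" where
  "supnorm T u = (SUP t\<in>{0..T}. \<bar>u t\<bar>)"

definition gam :: "real \<Rightarrow> real \<Rightarrow> real \<Rightarrow> real" where
  "gam T \<eta> \<alpha> = \<alpha> * \<eta> * (T - \<eta>) / (T - \<alpha> * \<eta>^2)"

definition Lambda2 :: "real \<Rightarrow> real \<Rightarrow> real \<Rightarrow> (real \<Rightarrow> real) \<Rightarrow> real" where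
  "Lambda2 T \<eta> \<alpha> a = (1 - \<alpha> * \<eta>) /
     (gam T \<eta> \<alpha> * (integral {\<eta>..T} (\<lambda>s. (T - s) * a s)
       + 1/2 * integral {0..\<eta>} (\<lambda>s. (2 * (T - \<eta>) + \<alpha> * (\<eta>^2 - s^2)) * a s)))"

end

theory Submission
  imports Defs "HOL-Complex_Analysis.Great_Picard"
begin

text \<open>
  Shooting. For an initial height c the solution of u'' = - a f(u), u(0) = c, u'(0) = 0 is
  decreasing and concave, and it solves (P) exactly when the defect u(T) - \<alpha> \<integral>[0,\<eta>] u
  vanishes; it is then a positive solution of norm c. Whenever the defect is nonnegative,
  concavity gives u(T) \<ge> \<gamma> c, so for c = \<rho>2 the solution stays in [\<gamma> \<rho>2, \<rho>2], where f \<ge> M2 \<rho>2,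
  and M2 \<ge> \<Lambda>2 then forces the defect to be negative. Since f_0 = f_\<infinity> = 0, the load a f(u)
  is negligible against c for very small and very large c, where the defect is positive.

  For Lipschitz f the defect depends continuously on c, and the intermediate value theorem
  gives zeros below and above \<rho>2. For merely continuous f we apply this to the Lipschitz
  inf-convolutions of f, which converge to f uniformly from below, and pass to the limit
  with the Arzela-Ascoli theorem.
\<close>

section \<open>The double primitive\<close>

lemma continuous_on_subinterval:
  "continuous_on {0..T} y \<Longrightarrow> 0 \<le> a \<Longrightarrow> b \<le> T \<Longrightarrow> continuous_on {a..b} (y :: real \<Rightarrow> real)"
  by (rule continuous_on_subset) auto

definition double_primitive :: "(real \<Rightarrow> real) \<Rightarrow> real \<Rightarrow> real" where
  "double_primitive y t = integral {0..t} (\<lambda>s. (t - s) * y s)"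

lemma double_primitive_0 [simp]: "double_primitive y 0 = 0"
  by (simp add: double_primitive_def)

lemma double_primitive_eq:
  assumes "continuous_on {0..t} y"
  shows "double_primitive y t = t * integral {0..t} y - integral {0..t} (\<lambda>s. s * y s)"
proof -
  have "double_primitive y t = integral {0..t} (\<lambda>s. t * y s - s * y s)"
    unfolding double_primitive_def by (simp add: algebra_simps)
  also have "\<dots> = integral {0..t} (\<lambda>s. t * y s) - integral {0..t} (\<lambda>s. s * y s)"
    using assms by (intro integral_diff integrable_continuous_real continuous_intros)
  finally show ?thesis by simp
qed

lemma has_real_derivative_double_primitive:
  assumes "continuous_on {0..T} y" "t \<in> {0..T}"
  shows "(double_primitive y has_real_derivative integral {0..t} y) (at t within {0..T})"
proof -
  have "continuous_on {0..T} (\<lambda>s. s * y s)"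
    using assms(1) by (intro continuous_intros)
  from integral_has_real_derivative[OF this assms(2)]
    integral_has_real_derivative[OF assms]
  have "((\<lambda>x. x * integral {0..x} y - integral {0..x} (\<lambda>s. s * y s)) has_real_derivative
          integral {0..t} y) (at t within {0..T})"
    by (auto intro!: derivative_eq_intros)
  then show ?thesis
    by (rule has_field_derivative_transform_within[OF _ zero_less_one assms(2)])
       (auto intro!: double_primitive_eq[symmetric] continuous_on_subinterval[OF assms(1)])
qed

lemma continuous_on_double_primitive:
  assumes "continuous_on {0..T} y"
  shows "continuous_on {0..T} (double_primitive y)"
  unfolding continuous_on_eq_continuous_within
  using has_real_derivative_double_primitive[OF assms] DERIV_continuous by blast

lemma double_primitive_increment:
  assumes "continuous_on {0..T} y" "\<And>s. s \<in> {0..T} \<Longrightarrow> 0 \<le> y s \<and> y s \<le> B"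
    and "0 \<le> t1" "t1 \<le> t2" "t2 \<le> T"
  shows "0 \<le> double_primitive y t2 - double_primitive y t1"
    and "double_primitive y t2 - double_primitive y t1 \<le> T * B * (t2 - t1)"
proof -
  have "(double_primitive y has_derivative (\<lambda>h. integral {0..x} y * h)) (at x within {t1..t2})"
    if "t1 \<le> x" "x \<le> t2" for x
    using has_field_derivative_subset[OF has_real_derivative_double_primitive[OF assms(1)]] that assms
    by (auto simp: has_field_derivative_def)
  from mvt_very_simple[OF assms(4) this] obtain x where x: "x \<in> {t1..t2}"
    "double_primitive y t2 - double_primitive y t1 = integral {0..x} y * (t2 - t1)"
    by blast
  have y_int: "y integrable_on {0..x}"
    using x assms by (intro integrable_continuous_real continuous_on_subinterval[OF assms(1)]) auto
  have "0 \<le> integral {0..x} y"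
    using x assms by (intro integral_nonneg[OF y_int]) auto
  moreover have "integral {0..x} y \<le> integral {0..x} (\<lambda>_. B)"
    using x assms by (intro integral_le[OF y_int]) auto
  then have "integral {0..x} y \<le> x * B"
    using x assms(3) by simp
  moreover have "x * B \<le> T * B"
    using x assms(2)[of 0] assms(3-5) by (intro mult_right_mono) auto
  ultimately show "0 \<le> double_primitive y t2 - double_primitive y t1"
    and "double_primitive y t2 - double_primitive y t1 \<le> T * B * (t2 - t1)"
    using x assms(4) by (auto intro: mult_right_mono)
qed

lemma integral_square_kernel_eq:
  fixes y :: "real \<Rightarrow> real"
  assumes "continuous_on {0..t} y"
  shows "integral {0..t} (\<lambda>s. (t - s)^2 * y s)
    = t^2 * integral {0..t} y - 2 * t * integral {0..t} (\<lambda>s. s * y s)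
      + integral {0..t} (\<lambda>s. s^2 * y s)"
proof -
  have "integral {0..t} (\<lambda>s. (t - s)^2 * y s)
      = integral {0..t} (\<lambda>s. t^2 * y s - 2 * t * (s * y s) + s^2 * y s)"
    by (rule integral_cong) (simp add: power2_eq_square algebra_simps)
  also have "\<dots> = integral {0..t} (\<lambda>s. t^2 * y s) - integral {0..t} (\<lambda>s. 2 * t * (s * y s))
      + integral {0..t} (\<lambda>s. s^2 * y s)"
    using assms
    by (simp add: integral_add integral_diff integrable_diff integrable_continuous_real continuous_intros)
  finally show ?thesis by simp
qed

lemma has_integral_double_primitive:
  assumes "continuous_on {0..T} y" "0 \<le> e" "e \<le> T"
  shows "(double_primitive y has_integral integral {0..e} (\<lambda>s. (e - s)^2 * y s) / 2) {0..e}"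
proof -
  define G where "G x = integral {0..x} (\<lambda>s. (x - s)^2 * y s) / 2" for x
  have "(G has_vector_derivative double_primitive y x) (at x within {0..e})" if x: "x \<in> {0..e}" for x
  proof -
    have xT: "x \<in> {0..T}" using x assms by auto
    have "continuous_on {0..T} (\<lambda>s. s * y s)" "continuous_on {0..T} (\<lambda>s. s^2 * y s)"
      using assms(1) by (auto intro!: continuous_intros)
    note d = this[THEN integral_has_real_derivative, OF xT] integral_has_real_derivative[OF assms(1) xT]
    have "((\<lambda>x. (x^2 * integral {0..x} y - 2 * x * integral {0..x} (\<lambda>s. s * y s)
            + integral {0..x} (\<lambda>s. s^2 * y s)) / 2) has_real_derivative
          ((2 * x * integral {0..x} y + x^2 * y x) - (2 * integral {0..x} (\<lambda>s. s * y s) + 2 * x * (x * y x))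
            + x^2 * y x) / 2) (at x within {0..T})"
      by (rule derivative_eq_intros d refl | simp)+
    then have "((\<lambda>x. (x^2 * integral {0..x} y - 2 * x * integral {0..x} (\<lambda>s. s * y s)
            + integral {0..x} (\<lambda>s. s^2 * y s)) / 2) has_real_derivative
          x * integral {0..x} y - integral {0..x} (\<lambda>s. s * y s)) (at x within {0..T})"
      by (rule DERIV_cong) (simp add: power2_eq_square field_simps)
    then have "(G has_real_derivative x * integral {0..x} y - integral {0..x} (\<lambda>s. s * y s))
        (at x within {0..T})"
      by (rule has_field_derivative_transform_within[OF _ zero_less_one xT])
         (simp add: G_def integral_square_kernel_eq[OF continuous_on_subinterval[OF assms(1)]])
    then have "(G has_real_derivative double_primitive y x) (at x within {0..T})"
      using xT by (simp add: double_primitive_eq[OF continuous_on_subinterval[OF assms(1)]])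
    then show ?thesis
      using x assms by (auto simp: has_real_derivative_iff_has_vector_derivative[symmetric]
                              intro: has_field_derivative_subset)
  qed
  from fundamental_theorem_of_calculus[OF assms(2) this] show ?thesis
    by (simp add: G_def)
qed

lemma double_primitive_chord:
  assumes "continuous_on {0..T} y" "\<And>s. s \<in> {0..T} \<Longrightarrow> 0 \<le> y s" "0 \<le> \<eta>" "\<eta> \<le> T"
  shows "T * double_primitive y \<eta> \<le> \<eta> * double_primitive y T"
proof -
  have y_int: "(\<lambda>s. (c * (d - s)) * y s) integrable_on {a..b}" if "0 \<le> a" "b \<le> T" for a b c d :: real
    by (intro integrable_continuous_real continuous_intros continuous_on_subinterval[OF assms(1)] that)
  have "T * double_primitive y \<eta> = integral {0..\<eta>} (\<lambda>s. (T * (\<eta> - s)) * y s)"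
    unfolding double_primitive_def by (simp add: mult.assoc)
  also have "\<dots> \<le> integral {0..\<eta>} (\<lambda>s. (\<eta> * (T - s)) * y s)"
  proof (rule integral_le)
    show "(\<lambda>s. (T * (\<eta> - s)) * y s) integrable_on {0..\<eta>}"
      "(\<lambda>s. (\<eta> * (T - s)) * y s) integrable_on {0..\<eta>}"
      using assms(4) by (auto intro: y_int)
    fix s assume s: "s \<in> {0..\<eta>}"
    have "\<eta> * s \<le> T * s"
      using s assms(4) by (intro mult_right_mono) auto
    then have "T * (\<eta> - s) \<le> \<eta> * (T - s)"
      by (simp add: algebra_simps)
    moreover have "0 \<le> y s"
      using s assms(2,4) by auto
    ultimately show "T * (\<eta> - s) * y s \<le> \<eta> * (T - s) * y s"
      by (rule mult_right_mono)
  qed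
  also have "\<dots> \<le> integral {0..\<eta>} (\<lambda>s. (\<eta> * (T - s)) * y s) + integral {\<eta>..T} (\<lambda>s. (\<eta> * (T - s)) * y s)"
  proof -
    have "0 \<le> integral {\<eta>..T} (\<lambda>s. (\<eta> * (T - s)) * y s)"
      using assms by (intro integral_nonneg y_int) auto
    then show ?thesis by simp
  qed
  also have "\<dots> = \<eta> * double_primitive y T"
    using Henstock_Kurzweil_Integration.integral_combine[OF assms(3,4) y_int[of 0 T \<eta> T]] assms
    by (simp add: double_primitive_def mult.assoc)
  finally show ?thesis .
qed

lemma double_primitive_tendsto:
  assumes "\<And>k. continuous_on {0..T} (y k)" "\<And>k s. s \<in> {0..T} \<Longrightarrow> \<bar>y k s\<bar> \<le> B"
    and "\<And>s. s \<in> {0..T} \<Longrightarrow> (\<lambda>k. y k s) \<longlonglongrightarrow> y0 s" and "t \<in> {0..T}"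
  shows "(\<lambda>k. double_primitive (y k) t) \<longlonglongrightarrow> double_primitive y0 t"
  unfolding double_primitive_def
proof (rule dominated_convergence(2))
  show "(\<lambda>s. (t - s) * y k s) integrable_on {0..t}" for k
    using assms(4) by (intro integrable_continuous_real continuous_intros
                               continuous_on_subinterval[OF assms(1)]) auto
  show "(\<lambda>s. T * B) integrable_on {0..t}"
    by (intro integrable_continuous_real continuous_intros)
  show "norm ((t - s) * y k s) \<le> T * B" if "s \<in> {0..t}" for k s
    using that assms(2)[of s k] assms(4) by (auto simp: abs_mult intro!: mult_mono)
  show "(\<lambda>k. (t - s) * y k s) \<longlonglongrightarrow> (t - s) * y0 s" if "s \<in> {0..t}" for s
    using that assms(3,4) by (intro tendsto_mult tendsto_const) auto
qed

lemma double_primitive_diff: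
  assumes "continuous_on {0..t} y1" "continuous_on {0..t} y2"
  shows "double_primitive y1 t - double_primitive y2 t = double_primitive (\<lambda>s. y1 s - y2 s) t"
  unfolding double_primitive_def using assms
  by (subst integral_diff[symmetric]) (auto intro!: integrable_continuous_real continuous_intros
                                          simp: algebra_simps)

lemma integral_exp_scaled:
  fixes K \<tau> :: real
  assumes "K > 0" "0 \<le> \<tau>"
  shows "integral {0..\<tau>} (\<lambda>s. exp (K * s)) = (exp (K * \<tau>) - 1) / K"
proof -
  have "((\<lambda>s. exp (K * s) / K) has_vector_derivative exp (K * x)) (at x within {0..\<tau>})" for x
    using assms(1)
    by (auto intro!: derivative_eq_intros simp: has_real_derivative_iff_has_vector_derivative[symmetric])
  from fundamental_theorem_of_calculus[OF assms(2) this] show ?thesis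
    by (simp add: integral_unique diff_divide_distrib)
qed

lemma abs_double_primitive_le_exp:
  assumes "continuous_on {0..\<tau>} y" "0 \<le> \<tau>" "K > 0"
    and "\<And>s. s \<in> {0..\<tau>} \<Longrightarrow> \<bar>y s\<bar> \<le> C * exp (K * s)"
  shows "\<bar>double_primitive y \<tau>\<bar> \<le> \<tau> * C * exp (K * \<tau>) / K"
proof -
  have "C \<ge> 0" using assms(4)[of 0] assms(2) by (auto intro: order_trans)
  have "\<bar>double_primitive y \<tau>\<bar> \<le> integral {0..\<tau>} (\<lambda>s. \<tau> * C * exp (K * s))"
    unfolding double_primitive_def real_norm_def[symmetric]
  proof (rule integral_norm_bound_integral)
    show "(\<lambda>s. (\<tau> - s) * y s) integrable_on {0..\<tau>}" "(\<lambda>s. \<tau> * C * exp (K * s)) integrable_on {0..\<tau>}"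
      using assms(1) by (auto intro!: integrable_continuous_real continuous_intros)
    show "norm ((\<tau> - s) * y s) \<le> \<tau> * C * exp (K * s)" if "s \<in> {0..\<tau>}" for s
      using that assms(4)[OF that] by (auto simp: abs_mult mult.assoc intro!: mult_mono)
  qed
  also have "\<dots> = \<tau> * C * ((exp (K * \<tau>) - 1) / K)"
    using integral_exp_scaled[OF assms(3,2)] by (simp add: integral_mult_right)
  also have "\<dots> \<le> \<tau> * C * exp (K * \<tau>) / K"
    using \<open>C \<ge> 0\<close> assms(2,3) by (auto intro!: mult_left_mono divide_right_mono)
  finally show ?thesis .
qed

lemma C2_with_double_primitive:
  assumes y: "continuous_on {0..T} y" and u: "\<And>t. t \<in> {0..T} \<Longrightarrow> u t = c - double_primitive y t"
  shows "C2_with T u (\<lambda>t. - integral {0..t} y) (\<lambda>t. - y t)"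
  unfolding C2_with_def
proof (intro conjI ballI)
  fix t assume t: "t \<in> {0..T}"
  have "((\<lambda>t. c - double_primitive y t) has_real_derivative - integral {0..t} y) (at t within {0..T})"
    using has_real_derivative_double_primitive[OF y t] by (auto intro!: derivative_eq_intros)
  then show "(u has_real_derivative - integral {0..t} y) (at t within {0..T})"
    by (rule has_field_derivative_transform_within[OF _ zero_less_one t]) (use u in auto)
  show "((\<lambda>t. - integral {0..t} y) has_real_derivative - y t) (at t within {0..T})"
    by (rule DERIV_minus[OF integral_has_real_derivative[OF y t]])
qed (use y in \<open>auto intro: continuous_intros\<close>)

lemma continuous_on_zero_between:
  fixes f :: "real \<Rightarrow> real"
  assumes "continuous_on {lo..hi} f" "lo \<le> hi" "f lo * f hi \<le> 0"
  shows "\<exists>c\<in>{lo..hi}. f c = 0"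
proof -
  have "(f lo \<le> 0 \<and> 0 \<le> f hi) \<or> (f hi \<le> 0 \<and> 0 \<le> f lo)"
    using assms(3) by (auto simp: mult_le_0_iff)
  then obtain c where "lo \<le> c" "c \<le> hi" "f c = 0"
    using IVT'[of f lo 0 hi] IVT2'[of f hi 0 lo] assms(1,2) by blast
  then show ?thesis by auto
qed

lemma eventually_le_of_ratio_tendsto_0:
  fixes f :: "real \<Rightarrow> real"
  assumes "((\<lambda>u. f u / u) \<longlongrightarrow> 0) F" "eventually (\<lambda>u. 0 < u) F" "0 < \<epsilon>"
  shows "eventually (\<lambda>u. f u \<le> \<epsilon> * u) F"
  using order_tendstoD(2)[OF assms(1,3)] assms(2)
  by eventually_elim (simp add: divide_less_eq less_imp_le)

lemma zero_of_ratio_tendsto_0: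
  fixes f :: "real \<Rightarrow> real"
  assumes "continuous_on {0..} f" "((\<lambda>u. f u / u) \<longlongrightarrow> 0) (at_right 0)"
  shows "f 0 = 0"
proof -
  have "((\<lambda>u. f u / u * u) \<longlongrightarrow> 0 * 0) (at_right 0)"
    by (intro tendsto_mult assms(2) tendsto_ident_at)
  moreover have "eventually (\<lambda>u. f u / u * u = f u) (at_right 0)"
    using eventually_at_right_less[of 0] by eventually_elim simp
  ultimately have "(f \<longlongrightarrow> 0) (at_right 0)"
    using tendsto_cong by force
  moreover have "(f \<longlongrightarrow> f 0) (at 0 within {0..})"
    using assms(1) by (simp add: continuous_on_def)
  then have "(f \<longlongrightarrow> f 0) (at_right 0)"
    by (rule tendsto_within_subset) auto
  ultimately show ?thesis
    using tendsto_unique[OF trivial_limit_at_right_real] by metis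
qed

lemma integral_pos_of_pos_point:
  fixes h :: "real \<Rightarrow> real"
  assumes "continuous_on {l..r} h" "\<And>t. t \<in> {l..r} \<Longrightarrow> 0 \<le> h t" "t0 \<in> {l..r}" "0 < h t0" "l < r"
  shows "0 < integral {l..r} h"
proof -
  have "0 \<le> integral {l..r} h"
    using assms by (intro integral_nonneg integrable_continuous_real) auto
  moreover have "integral {l..r} h \<noteq> 0"
  proof
    assume "integral {l..r} h = 0"
    then have "(h has_integral 0) (cbox l r)"
      using integrable_integral[OF integrable_continuous_real[OF assms(1)]] by simp
    from has_integral_0_cbox_imp_0[OF _ _ this] have "h t0 = 0"
      using assms by auto
    with assms(4) show False by simp
  qed
  ultimately show ?thesis by simp
qed

lemma supnorm_eq_max:
  assumes "t0 \<in> {0..T}" "\<And>t. t \<in> {0..T} \<Longrightarrow> \<bar>u t\<bar> \<le> \<bar>u t0\<bar>"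
  shows "supnorm T u = \<bar>u t0\<bar>"
  unfolding supnorm_def using assms by (intro cSup_eq_maximum) auto

lemma equi_lipschitz_convergent_subseq:
  fixes u :: "nat \<Rightarrow> real \<Rightarrow> real"
  assumes bounded: "\<And>n t. t \<in> {a..b} \<Longrightarrow> \<bar>u n t\<bar> \<le> M"
    and lipschitz: "\<And>n s t. s \<in> {a..b} \<Longrightarrow> t \<in> {a..b} \<Longrightarrow> \<bar>u n s - u n t\<bar> \<le> L * \<bar>s - t\<bar>"
  shows "\<exists>u0 r. continuous_on {a..b} u0 \<and> strict_mono r \<and> (\<forall>t\<in>{a..b}. (\<lambda>k. u (r k) t) \<longlonglongrightarrow> u0 t)"
proof -
  have equicont: "\<exists>d>0. \<forall>n y. y \<in> {a..b} \<and> norm (x - y) < d \<longrightarrow> norm (u n x - u n y) < e"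
    if x: "x \<in> {a..b}" and e: "0 < e" for x e
  proof (intro exI conjI allI impI)
    show "0 < e / (\<bar>L\<bar> + 1)" using e by simp
    fix n y assume y: "y \<in> {a..b} \<and> norm (x - y) < e / (\<bar>L\<bar> + 1)"
    have "\<bar>u n x - u n y\<bar> \<le> L * \<bar>x - y\<bar>"
      using lipschitz x y by blast
    also have "\<dots> \<le> (\<bar>L\<bar> + 1) * \<bar>x - y\<bar>"
      by (intro mult_right_mono) auto
    also have "\<dots> < e"
      using y by (simp add: pos_less_divide_eq mult.commute)
    finally show "norm (u n x - u n y) < e" by simp
  qed
  have bnd: "\<And>n x. x \<in> {a..b} \<Longrightarrow> norm (u n x) \<le> M"
    using bounded by simp
  show ?thesis
  proof (rule Arzela_Ascoli[OF compact_Icc bnd equicont])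
    fix u0 and r :: "nat \<Rightarrow> nat"
    assume u0: "continuous_on {a..b} u0" "strict_mono r"
      and unif: "\<And>e. 0 < e \<Longrightarrow> \<exists>N. \<forall>n x. n \<ge> N \<and> x \<in> {a..b} \<longrightarrow> norm (u (r n) x - u0 x) < e"
    have "(\<lambda>k. u (r k) t) \<longlonglongrightarrow> u0 t" if t: "t \<in> {a..b}" for t
    proof (rule LIMSEQ_I)
      fix e :: real assume "e > 0"
      then obtain N where "\<forall>n x. n \<ge> N \<and> x \<in> {a..b} \<longrightarrow> norm (u (r n) x - u0 x) < e"
        using unif by blast
      then show "\<exists>N. \<forall>n\<ge>N. norm (u (r n) t - u0 t) < e"
        using t by blast
    qed
    with u0 show ?thesis
      by blast
  qed
qed

lemma parametric_banach_fix:
  fixes \<Phi> :: "'p::metric_space \<Rightarrow> 'a::complete_space \<Rightarrow> 'a"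
  assumes q: "0 \<le> q" "q < 1"
    and contraction: "\<And>c x y. dist (\<Phi> c x) (\<Phi> c y) \<le> q * dist x y"
    and shift: "\<And>c d x. dist (\<Phi> c x) (\<Phi> d x) \<le> dist c d"
  obtains w where "\<And>c. \<Phi> c (w c) = w c" "\<And>c d. dist (w c) (w d) \<le> dist c d / (1 - q)"
proof -
  have unique: "\<exists>!x. \<Phi> c x = x" for c
    using q contraction by (intro banach_fix_type) auto
  define w where "w c = (THE x. \<Phi> c x = x)" for c
  have fixed: "\<Phi> c (w c) = w c" for c
    unfolding w_def by (rule theI'[OF unique])
  have "dist (w c) (w d) \<le> dist c d / (1 - q)" for c d
  proof -
    have "dist (w c) (w d) = dist (\<Phi> c (w c)) (\<Phi> d (w d))"
      by (simp add: fixed)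
    also have "\<dots> \<le> dist (\<Phi> c (w c)) (\<Phi> d (w c)) + dist (\<Phi> d (w c)) (\<Phi> d (w d))"
      by (rule dist_triangle)
    also have "\<dots> \<le> dist c d + q * dist (w c) (w d)"
      by (intro add_mono shift contraction)
    finally have "(1 - q) * dist (w c) (w d) \<le> dist c d"
      by (simp add: algebra_simps)
    then show ?thesis
      using q by (simp add: pos_le_divide_eq mult.commute)
  qed
  with fixed that show ?thesis by blast
qed

section \<open>Lipschitz inf-convolutions\<close>

definition nonneg_continuous :: "(real \<Rightarrow> real) \<Rightarrow> bool" where
  "nonneg_continuous g \<longleftrightarrow> continuous_on {0..} g \<and> (\<forall>x\<ge>0. 0 \<le> g x)"

text \<open>The largest n-Lipschitz minorant of f on [0,R].\<close>

definition inf_convolution :: "(real \<Rightarrow> real) \<Rightarrow> real \<Rightarrow> nat \<Rightarrow> real \<Rightarrow> real" where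
  "inf_convolution f R n x = Inf ((\<lambda>y. f y + real n * \<bar>x - y\<bar>) ` {0..R})"

context
  fixes f :: "real \<Rightarrow> real" and R :: real
  assumes R: "R \<ge> 0" and f_nonneg: "\<And>y. y \<in> {0..R} \<Longrightarrow> f y \<ge> 0"
begin

lemma inf_convolution_le_summand:
  "y \<in> {0..R} \<Longrightarrow> inf_convolution f R n x \<le> f y + real n * \<bar>x - y\<bar>"
  unfolding inf_convolution_def
  by (rule cInf_lower) (auto intro!: bdd_belowI[where m=0] add_nonneg_nonneg f_nonneg)

lemma inf_convolution_nonneg: "inf_convolution f R n x \<ge> 0"
  unfolding inf_convolution_def using R by (intro cInf_greatest) (auto intro!: add_nonneg_nonneg f_nonneg)

lemma inf_convolution_le: "x \<in> {0..R} \<Longrightarrow> inf_convolution f R n x \<le> f x"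
  using inf_convolution_le_summand[of x n x] by simp

lemma lipschitz_on_inf_convolution: "(real n)-lipschitz_on UNIV (inf_convolution f R n)"
proof -
  have key: "inf_convolution f R n x - real n * \<bar>x - x'\<bar> \<le> inf_convolution f R n x'" for x x'
    unfolding inf_convolution_def[of f R n x'] using R
  proof (intro cInf_greatest)
    fix z assume "z \<in> (\<lambda>y. f y + real n * \<bar>x' - y\<bar>) ` {0..R}"
    then obtain y where y: "y \<in> {0..R}" "z = f y + real n * \<bar>x' - y\<bar>" by blast
    have "real n * \<bar>x - y\<bar> \<le> real n * \<bar>x' - y\<bar> + real n * \<bar>x - x'\<bar>"
      by (simp add: distrib_left[symmetric] mult_left_mono)
    then show "inf_convolution f R n x - real n * \<bar>x - x'\<bar> \<le> z"
      using inf_convolution_le_summand[OF y(1), of n x] y(2) by linarith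
  qed auto
  have "\<bar>inf_convolution f R n x - inf_convolution f R n x'\<bar> \<le> real n * \<bar>x - x'\<bar>" for x x'
    using key[of x x'] key[of x' x] by (auto simp: abs_le_iff abs_minus_commute)
  then show ?thesis
    by (auto simp: lipschitz_on_def dist_real_def)
qed

lemma nonneg_continuous_inf_convolution: "nonneg_continuous (inf_convolution f R n)"
  unfolding nonneg_continuous_def
  using lipschitz_on_continuous_on[OF lipschitz_on_inf_convolution] inf_convolution_nonneg
  by (auto intro: continuous_on_subset)

lemma inf_convolution_uniform_approx:
  assumes f_cont: "continuous_on {0..R} f" and "e > 0"
  shows "\<exists>N. \<forall>n\<ge>N. \<forall>x\<in>{0..R}. f x - e \<le> inf_convolution f R n x"
proof -
  obtain d where d: "d > 0" "\<And>x y. x \<in> {0..R} \<Longrightarrow> y \<in> {0..R} \<Longrightarrow> \<bar>x - y\<bar> < d \<Longrightarrow> \<bar>f x - f y\<bar> < e"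
    using compact_uniformly_continuous[OF f_cont compact_Icc] \<open>e > 0\<close>
    unfolding uniformly_continuous_on_def dist_real_def by metis
  obtain M where M: "\<And>y. y \<in> {0..R} \<Longrightarrow> f y \<le> M"
    using compact_attains_sup[OF compact_continuous_image[OF f_cont compact_Icc]] R by fastforce
  obtain N :: nat where N: "M / d \<le> real N"
    using real_arch_simple by blast
  have "f x - e \<le> inf_convolution f R n x" if n: "N \<le> n" and x: "x \<in> {0..R}" for n x
    unfolding inf_convolution_def using R
  proof (intro cInf_greatest)
    fix z assume "z \<in> (\<lambda>y. f y + real n * \<bar>x - y\<bar>) ` {0..R}"
    then obtain y where y: "y \<in> {0..R}" "z = f y + real n * \<bar>x - y\<bar>" by blast
    show "f x - e \<le> z"
    proof (cases "\<bar>x - y\<bar> < d")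
      case True
      have "0 \<le> real n * \<bar>x - y\<bar>" by simp
      with d(2)[OF x y(1) True] y(2) show ?thesis unfolding abs_less_iff by linarith
    next
      case False
      have "M \<le> real N * d" using N d(1) by (simp add: divide_le_eq)
      also have "\<dots> \<le> real n * \<bar>x - y\<bar>" using n False d(1) by (intro mult_mono) auto
      finally show ?thesis using M[OF x] f_nonneg[OF y(1)] y(2) \<open>e > 0\<close> by linarith
    qed
  qed auto
  then show ?thesis by blast
qed

lemma inf_convolution_tendsto:
  assumes f_cont: "continuous_on {0..R} f" and "filterlim \<sigma> at_top sequentially"
    and "\<And>k. xs k \<in> {0..R}" "xs \<longlonglongrightarrow> x" "x \<in> {0..R}"
  shows "(\<lambda>k. inf_convolution f R (\<sigma> k) (xs k)) \<longlonglongrightarrow> f x"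
proof -
  have "(\<lambda>k. inf_convolution f R (\<sigma> k) (xs k) - f (xs k)) \<longlonglongrightarrow> 0"
  proof (rule LIMSEQ_I)
    fix e :: real assume "e > 0"
    then obtain N where N: "\<forall>n\<ge>N. \<forall>x\<in>{0..R}. f x - e / 2 \<le> inf_convolution f R n x"
      using inf_convolution_uniform_approx[OF f_cont, of "e / 2"] by auto
    obtain k0 where "\<forall>k\<ge>k0. N \<le> \<sigma> k"
      using assms(2) unfolding filterlim_at_top eventually_sequentially by blast
    then have "\<bar>inf_convolution f R (\<sigma> k) (xs k) - f (xs k)\<bar> < e" if "k \<ge> k0" for k
      using N that assms(3)[of k] inf_convolution_le[OF assms(3)] \<open>e > 0\<close> by force
    then show "\<exists>k0. \<forall>k\<ge>k0. norm (inf_convolution f R (\<sigma> k) (xs k) - f (xs k) - 0) < e"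
      by auto
  qed
  moreover have "(\<lambda>k. f (xs k)) \<longlonglongrightarrow> f x"
    using continuous_on_tendsto_compose[OF f_cont assms(4,5)] assms(3) by auto
  ultimately show ?thesis
    using tendsto_add by fastforce
qed

end

section \<open>Initial value problems with a Lipschitz nonlinearity\<close>

lemma weighted_double_primitive_contraction:
  fixes a g v1 v2 :: "real \<Rightarrow> real"
  assumes a: "continuous_on {0..T} a" "\<And>s. s \<in> {0..T} \<Longrightarrow> \<bar>a s\<bar> \<le> A"
    and g: "L-lipschitz_on UNIV g" and K: "K > 0" and \<tau>: "\<tau> \<in> {0..T}"
    and v: "continuous_on {0..T} v1" "continuous_on {0..T} v2"
      "\<And>s. s \<in> {0..T} \<Longrightarrow> \<bar>v1 s - v2 s\<bar> \<le> D"
  shows "exp (- (K * \<tau>)) * \<bar>double_primitive (\<lambda>s. a s * g (exp (K * s) * v1 s)) \<tau>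
           - double_primitive (\<lambda>s. a s * g (exp (K * s) * v2 s)) \<tau>\<bar> \<le> T * A * L * D / K"
proof -
  have g_cont: "continuous_on UNIV g"
    using g by (rule lipschitz_on_continuous_on)
  have cont: "continuous_on {0..\<tau>} (\<lambda>s. a s * g (exp (K * s) * v s))"
    if "continuous_on {0..T} v" for v
  proof -
    have "continuous_on {0..\<tau>} (\<lambda>s. exp (K * s) * v s)"
      using \<tau> by (intro continuous_intros continuous_on_subinterval[OF that]) auto
    then have "continuous_on {0..\<tau>} (\<lambda>s. g (exp (K * s) * v s))"
      by (rule continuous_on_compose2[OF g_cont]) auto
    then show ?thesis
      using \<tau> by (intro continuous_intros continuous_on_subinterval[OF a(1)]) auto
  qed
  have "0 \<le> A" "0 \<le> L" "0 \<le> D"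
    using a(2)[of 0] v(3)[of 0] \<tau> lipschitz_on_nonneg[OF g] by auto
  have "\<bar>a s * g (exp (K * s) * v1 s) - a s * g (exp (K * s) * v2 s)\<bar> \<le> A * L * D * exp (K * s)"
    if s: "s \<in> {0..\<tau>}" for s
  proof -
    have "\<bar>g (exp (K * s) * v1 s) - g (exp (K * s) * v2 s)\<bar> \<le> L * \<bar>exp (K * s) * v1 s - exp (K * s) * v2 s\<bar>"
      using lipschitz_onD[OF g] by (simp add: dist_real_def)
    also have "\<dots> = L * exp (K * s) * \<bar>v1 s - v2 s\<bar>"
      by (simp add: abs_mult right_diff_distrib[symmetric])
    also have "\<dots> \<le> L * exp (K * s) * D"
      using s \<tau> v(3)[of s] \<open>0 \<le> L\<close> by (intro mult_left_mono) auto
    finally have "\<bar>a s\<bar> * \<bar>g (exp (K * s) * v1 s) - g (exp (K * s) * v2 s)\<bar> \<le> A * (L * exp (K * s) * D)"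
      using s \<tau> a(2)[of s] \<open>0 \<le> L\<close> \<open>0 \<le> D\<close> by (intro mult_mono) auto
    then show ?thesis
      by (simp add: abs_mult right_diff_distrib[symmetric] mult_ac)
  qed
  then have "\<bar>double_primitive (\<lambda>s. a s * g (exp (K * s) * v1 s)) \<tau>
             - double_primitive (\<lambda>s. a s * g (exp (K * s) * v2 s)) \<tau>\<bar> \<le> \<tau> * (A * L * D) * exp (K * \<tau>) / K"
    using \<tau> K by (subst double_primitive_diff[OF cont[OF v(1)] cont[OF v(2)]])
                   (intro abs_double_primitive_le_exp continuous_intros cont v; auto)
  then have "exp (- (K * \<tau>)) * \<bar>double_primitive (\<lambda>s. a s * g (exp (K * s) * v1 s)) \<tau>
             - double_primitive (\<lambda>s. a s * g (exp (K * s) * v2 s)) \<tau>\<bar> \<le> \<tau> * (A * L * D) / K"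
    by (simp add: exp_minus field_simps)
  also have "\<dots> \<le> T * A * L * D / K"
    using \<tau> K \<open>0 \<le> A\<close> \<open>0 \<le> L\<close> \<open>0 \<le> D\<close> by (simp add: divide_right_mono mult_right_mono mult.assoc)
  finally show ?thesis .
qed

lemma continuous_fixed_point_family:
  fixes F :: "real \<Rightarrow> (real \<Rightarrow> real) \<Rightarrow> real \<Rightarrow> real"
  assumes T: "0 \<le> T" and q: "0 \<le> q" "q < 1"
    and F_cont: "\<And>c v. continuous_on {0..T} v \<Longrightarrow> continuous_on {0..T} (F c v)"
    and contraction: "\<And>c v1 v2 D t. continuous_on {0..T} v1 \<Longrightarrow> continuous_on {0..T} v2
      \<Longrightarrow> (\<And>s. s \<in> {0..T} \<Longrightarrow> \<bar>v1 s - v2 s\<bar> \<le> D) \<Longrightarrow> t \<in> {0..T} \<Longrightarrow> \<bar>F c v1 t - F c v2 t\<bar> \<le> q * D"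
    and shift: "\<And>c d v t. t \<in> {0..T} \<Longrightarrow> \<bar>F c v t - F d v t\<bar> \<le> \<bar>c - d\<bar>"
  shows "\<exists>w. (\<forall>c. continuous_on {0..T} (w c)) \<and> (\<forall>c. \<forall>t\<in>{0..T}. w c t = F c (w c) t)
    \<and> (\<forall>c d. \<forall>t\<in>{0..T}. \<bar>w c t - w d t\<bar> \<le> \<bar>c - d\<bar> / (1 - q))"
proof -
  \<comment> \<open>Work in the Banach space of bounded continuous functions, extending constantly outside [0,T].\<close>
  define \<Phi> :: "real \<Rightarrow> (real \<Rightarrow>\<^sub>C real) \<Rightarrow> (real \<Rightarrow>\<^sub>C real)" where
    "\<Phi> c w = (SOME w'. \<forall>t. apply_bcontfun w' t = F c (apply_bcontfun w) (clamp 0 T t))" for c w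
  have \<Phi>_apply: "apply_bcontfun (\<Phi> c w) t = F c (apply_bcontfun w) (clamp 0 T t)" for c w t
  proof -
    have "continuous_on (cbox 0 T) (F c (apply_bcontfun w))"
      using F_cont[OF continuous_on_apply_bcontfun] by simp
    then obtain w' :: "real \<Rightarrow>\<^sub>C real" where "\<And>t. apply_bcontfun w' t = F c (apply_bcontfun w) (clamp 0 T t)"
      by (rule continuous_on_cbox_bcontfunE) blast
    then have "\<forall>t. apply_bcontfun (\<Phi> c w) t = F c (apply_bcontfun w) (clamp 0 T t)"
      unfolding \<Phi>_def
      by (intro someI_ex[where P = "\<lambda>w'. \<forall>t. apply_bcontfun w' t = F c (apply_bcontfun w) (clamp 0 T t)"])
         blast
    then show ?thesis by blast
  qed
  have clamp: "clamp 0 T t \<in> {0..T}" for t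
    using clamp_in_interval[of 0 T t] T by simp
  have "dist (\<Phi> c w1) (\<Phi> c w2) \<le> q * dist w1 w2" for c w1 w2
  proof (rule dist_bound)
    show "dist (\<Phi> c w1 t) (\<Phi> c w2 t) \<le> q * dist w1 w2" for t
      unfolding \<Phi>_apply dist_real_def
    proof (rule contraction[OF continuous_on_apply_bcontfun continuous_on_apply_bcontfun _ clamp])
      show "\<bar>w1 s - w2 s\<bar> \<le> dist w1 w2" for s
        using dist_bounded[of w1 s w2] by (simp add: dist_real_def)
    qed
  qed
  moreover have "dist (\<Phi> c w) (\<Phi> d w) \<le> dist c d" for c d w
    by (rule dist_bound) (simp add: \<Phi>_apply dist_real_def shift[OF clamp])
  ultimately obtain w where w: "\<And>c. \<Phi> c (w c) = w c" "\<And>c d. dist (w c) (w d) \<le> dist c d / (1 - q)"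
    using parametric_banach_fix[OF q] by blast
  have "w c t = F c (w c) t" if "t \<in> {0..T}" for c t
    using \<Phi>_apply[of c "w c" t] that by (simp add: w(1) clamp_cancel_cbox)
  moreover have "\<bar>w c t - w d t\<bar> \<le> \<bar>c - d\<bar> / (1 - q)" for c d t
    using dist_bounded[of "w c" t "w d"] w(2)[of c d] by (simp add: dist_real_def)
  ultimately show ?thesis
    by (intro exI[of _ "\<lambda>c. apply_bcontfun (w c)"]) (blast intro: continuous_on_apply_bcontfun)
qed

lemma lipschitz_ivp_solution:
  fixes a g :: "real \<Rightarrow> real"
  assumes a: "continuous_on {0..T} a" and g: "L-lipschitz_on UNIV g" and T: "0 \<le> T"
  obtains S :: "real \<Rightarrow> real \<Rightarrow> real" and C where
    "\<And>c. continuous_on {0..T} (S c)"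
    "\<And>c t. t \<in> {0..T} \<Longrightarrow> S c t = c - double_primitive (\<lambda>s. a s * g (S c s)) t"
    "\<And>c d t. t \<in> {0..T} \<Longrightarrow> \<bar>S c t - S d t\<bar> \<le> C * \<bar>c - d\<bar>"
proof -
  obtain A where A: "\<And>s. s \<in> {0..T} \<Longrightarrow> \<bar>a s\<bar> \<le> A"
    using compact_imp_bounded[OF compact_continuous_image[OF a compact_Icc]]
    unfolding bounded_real by blast
  have "0 \<le> T * A * L"
    using A[of 0] T lipschitz_on_nonneg[OF g] by simp
  define K where "K = T * A * L + 1"
  define q where "q = T * A * L / K"
  have K: "K > 0" and q: "0 \<le> q" "q < 1"
    using \<open>0 \<le> T * A * L\<close> by (auto simp: K_def q_def)
  have g_cont: "continuous_on UNIV g"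
    using g by (rule lipschitz_on_continuous_on)
  \<comment> \<open>Bielecki's weight: for v t = exp (- K t) * u t the integral equation is a contraction.\<close>
  define F where "F c v \<tau> = exp (- (K * \<tau>)) * (c - double_primitive (\<lambda>s. a s * g (exp (K * s) * v s)) \<tau>)"
    for c and v :: "real \<Rightarrow> real" and \<tau>
  have "\<exists>w. (\<forall>c. continuous_on {0..T} (w c)) \<and> (\<forall>c. \<forall>t\<in>{0..T}. w c t = F c (w c) t)
    \<and> (\<forall>c d. \<forall>t\<in>{0..T}. \<bar>w c t - w d t\<bar> \<le> \<bar>c - d\<bar> / (1 - q))"
  proof (rule continuous_fixed_point_family[OF T q])
    show "continuous_on {0..T} (F c v)" if "continuous_on {0..T} v" for c v
    proof -
      have "continuous_on {0..T} (\<lambda>s. g (exp (K * s) * v s))"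
        using that by (intro continuous_on_compose2[OF g_cont] continuous_intros) auto
      then show ?thesis
        unfolding F_def using a by (intro continuous_intros continuous_on_double_primitive)
    qed
    show "\<bar>F c v1 t - F c v2 t\<bar> \<le> q * D"
      if "continuous_on {0..T} v1" "continuous_on {0..T} v2" "\<And>s. s \<in> {0..T} \<Longrightarrow> \<bar>v1 s - v2 s\<bar> \<le> D"
        "t \<in> {0..T}" for c v1 v2 D t
      using weighted_double_primitive_contraction[OF a A g K that(4,1,2,3)]
      by (simp add: F_def q_def abs_mult right_diff_distrib[symmetric] abs_minus_commute)
    show "\<bar>F c v t - F d v t\<bar> \<le> \<bar>c - d\<bar>" if "t \<in> {0..T}" for c d v t
      using that K by (simp add: F_def abs_mult right_diff_distrib[symmetric] mult_left_le_one_le)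
  qed
  then obtain w where w_cont: "\<And>c. continuous_on {0..T} (w c)"
    and w_eq: "\<And>c t. t \<in> {0..T} \<Longrightarrow> w c t = F c (w c) t"
    and w_lip: "\<And>c d t. t \<in> {0..T} \<Longrightarrow> \<bar>w c t - w d t\<bar> \<le> \<bar>c - d\<bar> / (1 - q)"
    by blast
  define S where "S c t = exp (K * t) * w c t" for c t
  show ?thesis
  proof (rule that)
    show "continuous_on {0..T} (S c)" for c
      unfolding S_def by (intro continuous_intros w_cont)
    show "S c t = c - double_primitive (\<lambda>s. a s * g (S c s)) t" if "t \<in> {0..T}" for c t
      using w_eq[OF that, of c] by (simp add: F_def S_def exp_minus field_simps)
    show "\<bar>S c t - S d t\<bar> \<le> exp (K * T) / (1 - q) * \<bar>c - d\<bar>" if "t \<in> {0..T}" for c d t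
    proof -
      have "\<bar>S c t - S d t\<bar> = exp (K * t) * \<bar>w c t - w d t\<bar>"
        by (simp add: S_def abs_mult right_diff_distrib[symmetric])
      also have "\<dots> \<le> exp (K * T) * (\<bar>c - d\<bar> / (1 - q))"
        using that K w_lip[OF that, of c d] by (intro mult_mono) auto
      finally show ?thesis by simp
    qed
  qed
qed

section \<open>The shooting method\<close>

locale integral_bvp =
  fixes T \<eta> \<alpha> :: real and a :: "real \<Rightarrow> real"
  assumes T_pos: "0 < T" and eta: "0 < \<eta>" "\<eta> < T" and alpha: "0 < \<alpha>" "\<alpha> * \<eta> < 1"
    and a_cont: "continuous_on {0..T} a" and a_nonneg: "\<And>t. t \<in> {0..T} \<Longrightarrow> 0 \<le> a t"
begin

definition rhs :: "(real \<Rightarrow> real) \<Rightarrow> (real \<Rightarrow> real) \<Rightarrow> real \<Rightarrow> real" where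
  "rhs g u s = a s * g (max (u s) 0)"

text \<open>
  Integrated form of u'' = - a g(u), u(0) = c, u'(0) = 0; the positive part keeps g on [0,\<infinity>),
  where it is given.
\<close>

definition shooting_sol :: "(real \<Rightarrow> real) \<Rightarrow> real \<Rightarrow> (real \<Rightarrow> real) \<Rightarrow> bool" where
  "shooting_sol g c u \<longleftrightarrow> continuous_on {0..T} u \<and>
     (\<forall>t\<in>{0..T}. u t = c - double_primitive (rhs g u) t)"

definition bc_defect :: "(real \<Rightarrow> real) \<Rightarrow> real" where
  "bc_defect u = u T - \<alpha> * integral {0..\<eta>} u"

text \<open>Lambda2 T \<eta> \<alpha> a = (1 - \<alpha> \<eta>) / (gam T \<eta> \<alpha> \<cdot> load_integral).\<close>

definition load_integral :: real where
  "load_integral = integral {\<eta>..T} (\<lambda>s. (T - s) * a s)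
     + 1/2 * integral {0..\<eta>} (\<lambda>s. (2 * (T - \<eta>) + \<alpha> * (\<eta>^2 - s^2)) * a s)"

definition a_max :: real where
  "a_max = Sup (a ` {0..T})"

lemma a_le_a_max: "t \<in> {0..T} \<Longrightarrow> a t \<le> a_max"
  unfolding a_max_def
  by (intro cSup_upper imageI bounded_imp_bdd_above
        compact_imp_bounded[OF compact_continuous_image[OF a_cont compact_Icc]])

lemma a_max_nonneg: "0 \<le> a_max"
  using a_nonneg[of 0] a_le_a_max[of 0] T_pos by auto

lemma gam_denominator_pos: "0 < T - \<alpha> * \<eta>^2"
proof -
  have "\<alpha> * \<eta> * \<eta> < \<eta>"
    using alpha eta mult_strict_right_mono[of "\<alpha> * \<eta>" 1 \<eta>] by simp
  then have "\<alpha> * \<eta>^2 < \<eta>"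
    by (simp add: power2_eq_square mult.assoc)
  then show ?thesis
    using eta by linarith
qed

lemma gam_pos: "0 < gam T \<eta> \<alpha>"
  unfolding gam_def using gam_denominator_pos alpha eta by simp

lemma gam_less_1: "gam T \<eta> \<alpha> < 1"
proof -
  have "\<alpha> * \<eta> * T < T"
    using alpha T_pos mult_strict_right_mono[of "\<alpha> * \<eta>" 1 T] by simp
  then have "\<alpha> * \<eta> * (T - \<eta>) < T - \<alpha> * \<eta>^2"
    by (simp add: algebra_simps power2_eq_square)
  then show ?thesis
    unfolding gam_def using gam_denominator_pos by (simp add: pos_divide_less_eq)
qed

lemma continuous_on_rhs:
  assumes "continuous_on {0..T} u" "nonneg_continuous g"
  shows "continuous_on {0..T} (rhs g u)"
proof -
  have "continuous_on {0..} g"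
    using assms(2) unfolding nonneg_continuous_def by blast
  moreover have "continuous_on {0..T} (\<lambda>s. max (u s) 0)"
    by (intro continuous_on_max assms(1) continuous_on_const)
  ultimately have "continuous_on {0..T} (\<lambda>s. g (max (u s) 0))"
    by (rule continuous_on_compose2) auto
  then show ?thesis
    unfolding rhs_def by (rule continuous_on_mult[OF a_cont])
qed

lemma rhs_nonneg: "nonneg_continuous g \<Longrightarrow> s \<in> {0..T} \<Longrightarrow> 0 \<le> rhs g u s"
  unfolding rhs_def nonneg_continuous_def using a_nonneg by simp

context
  fixes g u c
  assumes sol: "shooting_sol g c u" and g: "nonneg_continuous g"
begin

lemma shooting_sol_eq: "t \<in> {0..T} \<Longrightarrow> u t = c - double_primitive (rhs g u) t"
  using sol unfolding shooting_sol_def by blast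

lemma shooting_sol_cont: "continuous_on {0..T} u"
  using sol unfolding shooting_sol_def by blast

lemma continuous_on_shooting_rhs: "continuous_on {0..T} (rhs g u)"
  by (rule continuous_on_rhs[OF shooting_sol_cont g])

lemma shooting_sol_start: "u 0 = c"
  using shooting_sol_eq[of 0] T_pos by simp

lemma shooting_sol_increment:
  assumes "\<And>s. s \<in> {0..T} \<Longrightarrow> rhs g u s \<le> B" and "0 \<le> t1" "t1 \<le> t2" "t2 \<le> T"
  shows "0 \<le> u t1 - u t2" and "u t1 - u t2 \<le> T * B * (t2 - t1)"
proof -
  have "0 \<le> rhs g u s \<and> rhs g u s \<le> B" if "s \<in> {0..T}" for s
    using rhs_nonneg[OF g that] assms(1)[OF that] by blast
  from double_primitive_increment[OF continuous_on_shooting_rhs this assms(2-4)]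
  show "0 \<le> u t1 - u t2" and "u t1 - u t2 \<le> T * B * (t2 - t1)"
    using shooting_sol_eq[of t1] shooting_sol_eq[of t2] assms(2-4) by auto
qed

lemma shooting_sol_antimono:
  assumes "0 \<le> t1" "t1 \<le> t2" "t2 \<le> T"
  shows "u t2 \<le> u t1"
proof -
  obtain B where B: "\<forall>x\<in>rhs g u ` {0..T}. \<bar>x\<bar> \<le> B"
    using compact_imp_bounded[OF compact_continuous_image[OF continuous_on_shooting_rhs compact_Icc]]
    unfolding bounded_real by blast
  have "rhs g u s \<le> B" if "s \<in> {0..T}" for s
    using B that by (auto simp: abs_le_iff)
  from shooting_sol_increment(1)[OF this assms] show ?thesis by simp
qed

lemma shooting_sol_le_start: "t \<in> {0..T} \<Longrightarrow> u t \<le> c"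
  using shooting_sol_antimono[of 0 t] shooting_sol_start by auto

lemma shooting_sol_lipschitz:
  assumes "\<And>s. s \<in> {0..T} \<Longrightarrow> rhs g u s \<le> B" and "t1 \<in> {0..T}" "t2 \<in> {0..T}"
  shows "\<bar>u t1 - u t2\<bar> \<le> T * B * \<bar>t1 - t2\<bar>"
  using shooting_sol_increment[OF assms(1), of t1 t2] shooting_sol_increment[OF assms(1), of t2 t1] assms(2,3)
  by (cases "t1 \<le> t2") auto

lemma shooting_sol_drop:
  assumes "\<And>s. s \<in> {0..T} \<Longrightarrow> rhs g u s \<le> B" and "t \<in> {0..T}"
  shows "c - u t \<le> T * B * T"
proof -
  have "0 \<le> B"
    using rhs_nonneg[OF g, of 0 u] assms(1)[of 0] T_pos by simp
  have "c - u t \<le> T * B * t"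
    using shooting_sol_increment(2)[OF assms(1), of 0 t] shooting_sol_start assms(2) by simp
  also have "\<dots> \<le> T * B * T"
    using assms(2) T_pos \<open>0 \<le> B\<close> by (intro mult_left_mono) auto
  finally show ?thesis .
qed

text \<open>
  Concavity: the chord bound for the double primitive and \<integral>[0,\<eta>] u \<ge> \<eta> u(\<eta>) turn a nonnegative
  defect into a lower bound for u(T).
\<close>

lemma shooting_sol_cone:
  assumes "0 \<le> bc_defect u"
  shows "gam T \<eta> \<alpha> * c \<le> u T"
proof -
  let ?W = "double_primitive (rhs g u)"
  have "\<eta> * u \<eta> \<le> integral {0..\<eta>} u"
  proof -
    have "integral {0..\<eta>} (\<lambda>_. u \<eta>) \<le> integral {0..\<eta>} u"
      using eta shooting_sol_antimono[of _ \<eta>]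
      by (intro integral_le integrable_continuous_real continuous_on_subinterval[OF shooting_sol_cont])
         auto
    then show ?thesis using eta by simp
  qed
  then have "\<alpha> * (\<eta> * u \<eta>) \<le> \<alpha> * integral {0..\<eta>} u"
    using alpha(1) by (intro mult_left_mono) auto
  also have "\<dots> \<le> u T"
    using assms by (simp add: bc_defect_def)
  finally have "T * (\<alpha> * (\<eta> * u \<eta>)) \<le> T * u T"
    using T_pos by (intro mult_left_mono) auto
  then have boundary: "\<alpha> * \<eta> * (T * c) - \<alpha> * \<eta> * (T * ?W \<eta>) \<le> T * u T"
    using shooting_sol_eq[of \<eta>] eta by (simp add: algebra_simps)
  have "T * ?W \<eta> \<le> \<eta> * ?W T"
    using eta by (intro double_primitive_chord continuous_on_shooting_rhs rhs_nonneg[OF g]) auto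
  then have chord: "\<alpha> * \<eta> * (T * ?W \<eta>) \<le> \<alpha> * \<eta> * (\<eta> * (c - u T))"
    using shooting_sol_eq[of T] T_pos alpha eta by (intro mult_left_mono) auto
  from boundary chord have "\<alpha> * \<eta> * (T - \<eta>) * c \<le> u T * (T - \<alpha> * \<eta>^2)"
    by (simp add: algebra_simps power2_eq_square)
  then show ?thesis
    using gam_denominator_pos unfolding gam_def by (simp add: divide_le_eq)
qed


lemma bc_defect_eq:
  "bc_defect u = c * (1 - \<alpha> * \<eta>) - (integral {\<eta>..T} (\<lambda>s. (T - s) * rhs g u s)
     + integral {0..\<eta>} (\<lambda>s. (T - s - \<alpha> / 2 * (\<eta> - s)^2) * rhs g u s))"
proof -
  let ?y = "rhs g u"
  note y_cont = continuous_on_shooting_rhs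
  have y_int: "(\<lambda>s. p s * ?y s) integrable_on {l..r}"
    if "continuous_on {l..r} p" "0 \<le> l" "r \<le> T" for p :: "real \<Rightarrow> real" and l r
    using that by (intro integrable_continuous_real continuous_on_mult continuous_on_subinterval[OF y_cont])
  define P where "P = integral {0..\<eta>} (\<lambda>s. (\<eta> - s)^2 * ?y s)"
  have "integral {0..\<eta>} u = integral {0..\<eta>} (\<lambda>t. c - double_primitive ?y t)"
    using eta by (intro integral_cong shooting_sol_eq) auto
  also have "\<dots> = c * \<eta> - P / 2"
    using has_integral_double_primitive[OF y_cont, of \<eta>] eta
    by (subst integral_diff) (auto simp: P_def integral_unique intro: has_integral_integrable)
  finally have int_u: "integral {0..\<eta>} u = c * \<eta> - P / 2" .
  have u_T: "u T = c - (integral {0..\<eta>} (\<lambda>s. (T - s) * ?y s) + integral {\<eta>..T} (\<lambda>s. (T - s) * ?y s))"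
    using shooting_sol_eq[of T] T_pos eta
      Henstock_Kurzweil_Integration.integral_combine[OF _ _ y_int[where p = "\<lambda>s. T - s" and l = 0 and r = T]]
    by (simp add: double_primitive_def continuous_intros)
  have "integral {0..\<eta>} (\<lambda>s. (T - s - \<alpha> / 2 * (\<eta> - s)^2) * ?y s)
      = integral {0..\<eta>} (\<lambda>s. (T - s) * ?y s - \<alpha> / 2 * ((\<eta> - s)^2 * ?y s))"
    by (rule integral_cong) (simp add: algebra_simps)
  also have "\<dots> = integral {0..\<eta>} (\<lambda>s. (T - s) * ?y s) - \<alpha> / 2 * P"
  proof -
    have "(\<lambda>s. (T - s) * ?y s) integrable_on {0..\<eta>}" "(\<lambda>s. (\<eta> - s)^2 * ?y s) integrable_on {0..\<eta>}"
      using eta by (auto intro!: y_int continuous_intros)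
    from integral_diff[OF this(1) integrable_on_cmult_left[OF this(2), of "\<alpha> / 2"]] show ?thesis
      by (simp add: P_def)
  qed
  finally show ?thesis
    unfolding bc_defect_def int_u u_T by (simp add: algebra_simps)
qed

lemma bc_defect_upper:
  assumes "0 \<le> m" and below: "\<And>s. s \<in> {0..T} \<Longrightarrow> m * a s \<le> rhs g u s"
  shows "bc_defect u \<le> c * (1 - \<alpha> * \<eta>) - m * load_integral"
proof -
  note y_cont = continuous_on_shooting_rhs
  have int: "(\<lambda>s. p s * h s) integrable_on {l..r}"
    if "continuous_on {0..T} h" "continuous_on {l..r} p" "0 \<le> l" "r \<le> T"
    for p h :: "real \<Rightarrow> real" and l r
    using that by (intro integrable_continuous_real continuous_on_mult continuous_on_subinterval[OF that(1)])
  have "integral {\<eta>..T} (\<lambda>s. (m * (T - s)) * a s) \<le> integral {\<eta>..T} (\<lambda>s. (T - s) * rhs g u s)"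
  proof (intro integral_le int[OF a_cont] int[OF y_cont] continuous_intros)
    fix s assume "s \<in> {\<eta>..T}"
    with eta below[of s] show "m * (T - s) * a s \<le> (T - s) * rhs g u s"
      using mult_left_mono[of "m * a s" "rhs g u s" "T - s"] by (simp add: mult_ac)
  qed (use eta in auto)
  then have J1: "m * integral {\<eta>..T} (\<lambda>s. (T - s) * a s) \<le> integral {\<eta>..T} (\<lambda>s. (T - s) * rhs g u s)"
    by (simp add: mult.assoc)
  have "integral {0..\<eta>} (\<lambda>s. (m * (1/2 * (2 * (T - \<eta>) + \<alpha> * (\<eta>^2 - s^2)))) * a s)
      \<le> integral {0..\<eta>} (\<lambda>s. (T - s - \<alpha> / 2 * (\<eta> - s)^2) * rhs g u s)"
  proof (intro integral_le int[OF a_cont] int[OF y_cont] continuous_intros)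
    fix s assume s: "s \<in> {0..\<eta>}"
    have "1/2 * (2 * (T - \<eta>) + \<alpha> * (\<eta>^2 - s^2)) + (\<eta> - s) * (1 - \<alpha> * \<eta>) = T - s - \<alpha> / 2 * (\<eta> - s)^2"
      by (simp add: algebra_simps power2_eq_square)
    moreover have "0 \<le> (\<eta> - s) * (1 - \<alpha> * \<eta>)" "0 \<le> \<alpha> * (\<eta>^2 - s^2)"
      using s alpha by (auto intro!: mult_nonneg_nonneg power_mono)
    moreover have "0 < T - \<eta>"
      using eta by simp
    ultimately have "1/2 * (2 * (T - \<eta>) + \<alpha> * (\<eta>^2 - s^2)) \<le> T - s - \<alpha> / 2 * (\<eta> - s)^2"
      "0 \<le> 1/2 * (2 * (T - \<eta>) + \<alpha> * (\<eta>^2 - s^2))"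
      by (linarith, simp)
    moreover have "0 \<le> m * a s" "m * a s \<le> rhs g u s"
      using s eta assms a_nonneg[of s] by auto
    ultimately have "1/2 * (2 * (T - \<eta>) + \<alpha> * (\<eta>^2 - s^2)) * (m * a s)
        \<le> (T - s - \<alpha> / 2 * (\<eta> - s)^2) * rhs g u s"
      by (intro mult_mono) auto
    then show "m * (1/2 * (2 * (T - \<eta>) + \<alpha> * (\<eta>^2 - s^2))) * a s
        \<le> (T - s - \<alpha> / 2 * (\<eta> - s)^2) * rhs g u s"
      by (simp add: mult_ac)
  qed (use eta in auto)
  then have J2: "m * (1/2 * integral {0..\<eta>} (\<lambda>s. (2 * (T - \<eta>) + \<alpha> * (\<eta>^2 - s^2)) * a s))
      \<le> integral {0..\<eta>} (\<lambda>s. (T - s - \<alpha> / 2 * (\<eta> - s)^2) * rhs g u s)"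
    by (simp add: mult.assoc)
  show ?thesis
    unfolding bc_defect_eq load_integral_def using J1 J2 by (simp only: distrib_left)
qed

lemma bc_defect_neg:
  assumes "0 < c" "0 \<le> m" and above: "\<And>x. x \<in> {gam T \<eta> \<alpha> * c..c} \<Longrightarrow> m \<le> g x"
    and "c * (1 - \<alpha> * \<eta>) < m * load_integral"
  shows "bc_defect u < 0"
proof (rule ccontr)
  assume "\<not> bc_defect u < 0"
  then have cone: "gam T \<eta> \<alpha> * c \<le> u T"
    by (intro shooting_sol_cone) simp
  have "m * a s \<le> rhs g u s" if s: "s \<in> {0..T}" for s
  proof -
    have "gam T \<eta> \<alpha> * c \<le> u s"
      using cone shooting_sol_antimono[of s T] s by auto
    moreover have "0 \<le> gam T \<eta> \<alpha> * c"
      using gam_pos \<open>0 < c\<close> by simp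
    ultimately have "m \<le> g (max (u s) 0)"
      using above shooting_sol_le_start[OF s] by auto
    from mult_right_mono[OF this a_nonneg[OF s]] show ?thesis
      unfolding rhs_def by (simp add: mult.commute)
  qed
  with bc_defect_upper[OF \<open>0 \<le> m\<close>] assms(4) \<open>\<not> bc_defect u < 0\<close> show False
    by fastforce
qed

lemma bc_defect_pos:
  assumes "0 \<le> c" and below: "\<And>x. x \<in> {0..c} \<Longrightarrow> g x \<le> B"
    and small: "T * T * a_max * B < c * (1 - \<alpha> * \<eta>)"
  shows "0 < bc_defect u"
proof -
  have "rhs g u s \<le> a_max * B" if s: "s \<in> {0..T}" for s
  proof -
    have "max (u s) 0 \<in> {0..c}"
      using shooting_sol_le_start[OF s] \<open>0 \<le> c\<close> by auto
    then have "0 \<le> g (max (u s) 0)" "g (max (u s) 0) \<le> B"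
      using g below unfolding nonneg_continuous_def by auto
    then show ?thesis
      unfolding rhs_def using a_nonneg[OF s] a_le_a_max[OF s] by (intro mult_mono) auto
  qed
  then have "c - u T \<le> T * (a_max * B) * T"
    using T_pos by (intro shooting_sol_drop) auto
  moreover have "integral {0..\<eta>} u \<le> integral {0..\<eta>} (\<lambda>_. c)"
    using eta shooting_sol_le_start
    by (intro integral_le integrable_continuous_real continuous_on_subinterval[OF shooting_sol_cont])
       auto
  then have "\<alpha> * integral {0..\<eta>} u \<le> \<alpha> * (\<eta> * c)"
    using alpha eta by (intro mult_left_mono) auto
  ultimately show ?thesis
    using small unfolding bc_defect_def by (simp add: algebra_simps)
qed

end

lemma lipschitz_bc_defect:
  assumes "\<And>t. t \<in> {0..T} \<Longrightarrow> \<bar>u t - v t\<bar> \<le> D" "continuous_on {0..T} u" "continuous_on {0..T} v"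
  shows "\<bar>bc_defect u - bc_defect v\<bar> \<le> (1 + \<alpha> * \<eta>) * D"
proof -
  have int: "u integrable_on {0..\<eta>}" "v integrable_on {0..\<eta>}"
    using eta assms(2,3) by (auto intro!: integrable_continuous_real intro: continuous_on_subinterval)
  have "\<bar>integral {0..\<eta>} u - integral {0..\<eta>} v\<bar> \<le> integral {0..\<eta>} (\<lambda>_. D)"
    unfolding integral_diff[OF int, symmetric] real_norm_def[symmetric]
    using eta assms(1) by (intro integral_norm_bound_integral integrable_diff int) auto
  then have "\<alpha> * \<bar>integral {0..\<eta>} u - integral {0..\<eta>} v\<bar> \<le> \<alpha> * (\<eta> * D)"
    using eta alpha by (intro mult_left_mono) auto
  have "\<bar>bc_defect u - bc_defect v\<bar>
      = \<bar>(u T - v T) - \<alpha> * (integral {0..\<eta>} u - integral {0..\<eta>} v)\<bar>"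
    by (simp add: bc_defect_def algebra_simps)
  also have "\<dots> \<le> \<bar>u T - v T\<bar> + \<alpha> * \<bar>integral {0..\<eta>} u - integral {0..\<eta>} v\<bar>"
    using abs_triangle_ineq4[of "u T - v T" "\<alpha> * (integral {0..\<eta>} u - integral {0..\<eta>} v)"] alpha
    by (simp add: abs_mult)
  also have "\<dots> \<le> D + \<alpha> * (\<eta> * D)"
    using assms(1) T_pos \<open>\<alpha> * _ \<le> \<alpha> * (\<eta> * D)\<close> by (intro add_mono) auto
  finally show ?thesis
    by (simp add: algebra_simps)
qed

lemma shooting_zero_exists:
  assumes g: "nonneg_continuous g" "L-lipschitz_on UNIV g" and "lo \<le> hi"
    and sign: "\<And>u v. shooting_sol g lo u \<Longrightarrow> shooting_sol g hi v \<Longrightarrow> bc_defect u * bc_defect v \<le> 0"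
  shows "\<exists>c\<in>{lo..hi}. \<exists>u. shooting_sol g c u \<and> bc_defect u = 0"
proof -
  have g_pos_lip: "L-lipschitz_on UNIV (\<lambda>x. g (max x 0))"
  proof (rule lipschitz_onI)
    fix x y :: real
    have "dist (g (max x 0)) (g (max y 0)) \<le> L * dist (max x 0) (max y 0)"
      by (rule lipschitz_onD[OF g(2)]) auto
    also have "\<dots> \<le> L * dist x y"
      using lipschitz_on_nonneg[OF g(2)] by (intro mult_left_mono) (auto simp: dist_real_def)
    finally show "dist (g (max x 0)) (g (max y 0)) \<le> L * dist x y" .
  qed (rule lipschitz_on_nonneg[OF g(2)])
  obtain S C where S_cont: "\<And>c. continuous_on {0..T} (S c)"
    and S_eq: "\<And>c t. t \<in> {0..T} \<Longrightarrow> S c t = c - double_primitive (\<lambda>s. a s * g (max (S c s) 0)) t"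
    and S_lip: "\<And>c d t. t \<in> {0..T} \<Longrightarrow> \<bar>S c t - S d t\<bar> \<le> C * \<bar>c - d\<bar>"
    using lipschitz_ivp_solution[OF a_cont g_pos_lip less_imp_le[OF T_pos]] by auto
  have sol: "shooting_sol g c (S c)" for c
    unfolding shooting_sol_def rhs_def using S_cont S_eq by blast
  have "((1 + \<alpha> * \<eta>) * \<bar>C\<bar>)-lipschitz_on {lo..hi} (\<lambda>c. bc_defect (S c))"
  proof (rule lipschitz_onI)
    fix c d
    have "\<bar>S c t - S d t\<bar> \<le> \<bar>C\<bar> * \<bar>c - d\<bar>" if "t \<in> {0..T}" for t
      using S_lip[OF that, of c d] by (meson abs_ge_self abs_ge_zero mult_right_mono order_trans)
    from lipschitz_bc_defect[OF this S_cont S_cont]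
    show "dist (bc_defect (S c)) (bc_defect (S d)) \<le> (1 + \<alpha> * \<eta>) * \<bar>C\<bar> * dist c d"
      by (simp add: dist_real_def mult.assoc)
  qed (use alpha eta in auto)
  then have "continuous_on {lo..hi} (\<lambda>c. bc_defect (S c))"
    by (rule lipschitz_on_continuous_on)
  from continuous_on_zero_between[OF this \<open>lo \<le> hi\<close> sign[OF sol sol]] sol show ?thesis
    by blast
qed

lemma bc_defect_tendsto:
  assumes "\<And>k. continuous_on {0..T} (us k)" "\<And>k t. t \<in> {0..T} \<Longrightarrow> \<bar>us k t\<bar> \<le> M"
    and "\<And>t. t \<in> {0..T} \<Longrightarrow> (\<lambda>k. us k t) \<longlonglongrightarrow> u t"
  shows "(\<lambda>k. bc_defect (us k)) \<longlonglongrightarrow> bc_defect u"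
proof -
  have "(\<lambda>k. integral {0..\<eta>} (us k)) \<longlonglongrightarrow> integral {0..\<eta>} u"
  proof (rule dominated_convergence(2))
    show "us k integrable_on {0..\<eta>}" for k
      using eta by (intro integrable_continuous_real continuous_on_subinterval[OF assms(1)]) auto
    show "(\<lambda>_. M) integrable_on {0..\<eta>}"
      by (rule integrable_const_ivl)
  qed (use assms(2,3) eta in auto)
  then show ?thesis
    unfolding bc_defect_def using assms(3) T_pos by (intro tendsto_intros) auto
qed

lemma shooting_sol_limit:
  assumes sol: "\<And>k. shooting_sol (gs k) (cs k) (us k)" and gs: "\<And>k. nonneg_continuous (gs k)"
    and "cs \<longlonglongrightarrow> c" and us: "\<And>t. t \<in> {0..T} \<Longrightarrow> (\<lambda>k. us k t) \<longlonglongrightarrow> u t"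
    and "continuous_on {0..T} u"
    and bound: "\<And>k s. s \<in> {0..T} \<Longrightarrow> rhs (gs k) (us k) s \<le> B"
    and rhs_lim: "\<And>s. s \<in> {0..T} \<Longrightarrow> (\<lambda>k. rhs (gs k) (us k) s) \<longlonglongrightarrow> rhs f u s"
  shows "shooting_sol f c u"
  unfolding shooting_sol_def
proof (intro conjI ballI)
  fix t assume t: "t \<in> {0..T}"
  have "\<bar>rhs (gs k) (us k) s\<bar> \<le> B" if "s \<in> {0..T}" for k s
    using bound[OF that] rhs_nonneg[OF gs that] by simp
  from double_primitive_tendsto[OF continuous_on_shooting_rhs[OF sol gs] this rhs_lim t]
  have "(\<lambda>k. us k t) \<longlonglongrightarrow> c - double_primitive (rhs f u) t"
    using shooting_sol_eq[OF sol gs t] \<open>cs \<longlonglongrightarrow> c\<close> by (auto intro: tendsto_diff)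
  with us[OF t] show "u t = c - double_primitive (rhs f u) t"
    by (rule LIMSEQ_unique)
qed fact

lemma shooting_zero_limit:
  assumes f: "nonneg_continuous f" and lo: "0 \<le> lo" "lo \<le> hi" "hi \<le> R"
    and zeros: "\<And>n. N \<le> n \<Longrightarrow> \<exists>c\<in>{lo..hi}. \<exists>u. shooting_sol (inf_convolution f R n) c u \<and> bc_defect u = 0"
  shows "\<exists>c\<in>{lo..hi}. \<exists>u. shooting_sol f c u \<and> bc_defect u = 0"
proof -
  define g where "g k = inf_convolution f R (k + N)" for k
  have f_nonneg: "\<And>y. y \<in> {0..R} \<Longrightarrow> 0 \<le> f y" and f_cont: "continuous_on {0..R} f"
    using f unfolding nonneg_continuous_def by (auto intro: continuous_on_subset)
  have R: "0 \<le> R" using lo by simp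
  have g: "nonneg_continuous (g k)" for k
    unfolding g_def by (rule nonneg_continuous_inf_convolution[OF R f_nonneg])
  obtain cs us where cs: "\<And>k. cs k \<in> {lo..hi}" and sol: "\<And>k. shooting_sol (g k) (cs k) (us k)"
    and zero: "\<And>k. bc_defect (us k) = 0"
    using zeros[of "_ + N"] unfolding g_def by (metis le_add2)
  obtain F where F: "\<And>y. y \<in> {0..R} \<Longrightarrow> f y \<le> F"
    using compact_attains_sup[OF compact_continuous_image[OF f_cont compact_Icc]] R by fastforce
  have us_le: "us k t \<le> hi" if "t \<in> {0..T}" for k t
    using shooting_sol_le_start[OF sol[of k] g[of k] that] cs[of k] by auto
  have us_range: "max (us k t) 0 \<in> {0..R}" if "t \<in> {0..T}" for k t
    using us_le[OF that, of k] lo by auto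
  have rhs_le: "rhs (g k) (us k) s \<le> a_max * F" if s: "s \<in> {0..T}" for k s
  proof -
    from us_range[OF s] have "g k (max (us k s) 0) \<le> F"
      using F inf_convolution_le[OF R f_nonneg] unfolding g_def by (meson order_trans)
    then show ?thesis
      unfolding rhs_def using s a_nonneg[OF s] a_le_a_max[OF s] g[of k]
      by (intro mult_mono) (auto simp: nonneg_continuous_def)
  qed
  have "0 \<le> T * (a_max * F) * T"
    using F[of 0] f_nonneg[of 0] R T_pos a_max_nonneg by simp
  then have "\<bar>us k t\<bar> \<le> hi + T * (a_max * F) * T" if t: "t \<in> {0..T}" for k t
    using us_le[OF t, of k] cs[of k] lo shooting_sol_drop[OF sol[of k] g[of k] rhs_le t]
    unfolding abs_le_iff atLeastAtMost_iff by linarith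
  moreover have "\<bar>us k s - us k t\<bar> \<le> T * (a_max * F) * \<bar>s - t\<bar>" if "s \<in> {0..T}" "t \<in> {0..T}" for k s t
    by (rule shooting_sol_lipschitz[OF sol g rhs_le that])
  ultimately have "\<exists>u r. continuous_on {0..T} u \<and> strict_mono r \<and> (\<forall>t\<in>{0..T}. (\<lambda>k. us (r k) t) \<longlonglongrightarrow> u t)"
    by (rule equi_lipschitz_convergent_subseq)
  then obtain u r where u: "continuous_on {0..T} u" and r: "strict_mono r"
    and lim: "\<And>t. t \<in> {0..T} \<Longrightarrow> (\<lambda>k. us (r k) t) \<longlonglongrightarrow> u t"
    by blast
  have c_lim: "(\<lambda>k. cs (r k)) \<longlonglongrightarrow> u 0"
    using lim[of 0] T_pos shooting_sol_start[OF sol g] by simp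
  have "u 0 \<in> {lo..hi}"
    using closed_atLeastAtMost _ c_lim by (rule closed_sequentially) (use cs in auto)
  have "shooting_sol f (u 0) u"
  proof (rule shooting_sol_limit[OF sol g c_lim lim u rhs_le])
    fix s assume s: "s \<in> {0..T}"
    have "filterlim (\<lambda>k. r k + N) at_top sequentially"
      by (rule filterlim_compose[OF filterlim_add_const_nat_at_top filterlim_subseq[OF r]])
    moreover have "u s \<le> hi"
      by (rule LIMSEQ_le_const2[OF lim[OF s]]) (use us_le[OF s] in auto)
    ultimately have "(\<lambda>k. inf_convolution f R (r k + N) (max (us (r k) s) 0)) \<longlonglongrightarrow> f (max (u s) 0)"
      using us_range[OF s] lo
      by (intro inf_convolution_tendsto[OF R f_nonneg f_cont] tendsto_max lim[OF s] tendsto_const) auto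
    then show "(\<lambda>k. rhs (g (r k)) (us (r k)) s) \<longlonglongrightarrow> rhs f u s"
      unfolding rhs_def g_def by (intro tendsto_mult tendsto_const)
  qed
  moreover have "bc_defect u = 0"
    using bc_defect_tendsto[OF shooting_sol_cont[OF sol g] \<open>\<And>k t. _ \<Longrightarrow> \<bar>us k t\<bar> \<le> _\<close> lim]
      zero by (simp add: LIMSEQ_const_iff)
  ultimately show ?thesis
    using \<open>u 0 \<in> {lo..hi}\<close> by blast
qed

lemma shooting_sol_pos:
  assumes "shooting_sol g c u" "nonneg_continuous g" "bc_defect u = 0" "0 < c" "t \<in> {0..T}"
  shows "0 < u t"
proof -
  have "0 < gam T \<eta> \<alpha> * c"
    using gam_pos assms(4) by simp
  also have "\<dots> \<le> u T"
    using assms(3) by (intro shooting_sol_cone[OF assms(1,2)]) simp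
  also have "\<dots> \<le> u t"
    using assms(5) by (intro shooting_sol_antimono[OF assms(1,2)]) auto
  finally show ?thesis .
qed

lemma pos_solution_of_shooting_zero:
  assumes f: "nonneg_continuous f" and sol: "shooting_sol f c u" and "bc_defect u = 0" "0 < c"
  shows "pos_solution T \<eta> \<alpha> a f u"
proof -
  have pos: "0 < u t" if "t \<in> {0..T}" for t
    using shooting_sol_pos[OF sol f assms(3,4) that] .
  have "C2_with T u (\<lambda>t. - integral {0..t} (rhs f u)) (\<lambda>t. - rhs f u t)"
    by (rule C2_with_double_primitive[OF continuous_on_shooting_rhs[OF sol f] shooting_sol_eq[OF sol f]])
  moreover have "\<forall>t\<in>{0<..<T}. - rhs f u t + a t * f (u t) = 0"
  proof
    fix t assume "t \<in> {0<..<T}"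
    then have "max (u t) 0 = u t"
      using pos[of t] by simp
    then show "- rhs f u t + a t * f (u t) = 0"
      by (simp add: rhs_def)
  qed
  moreover have "u T = \<alpha> * integral {0..\<eta>} u"
    using assms(3) by (simp add: bc_defect_def)
  ultimately have "\<exists>u1 u2. C2_with T u u1 u2 \<and> (\<forall>t\<in>{0<..<T}. u2 t + a t * f (u t) = 0) \<and>
      u1 0 = 0 \<and> u T = \<alpha> * integral {0..\<eta>} u"
    by (intro exI[of _ "\<lambda>t. - integral {0..t} (rhs f u)"] exI[of _ "\<lambda>t. - rhs f u t"]) simp
  moreover have "\<forall>t\<in>{0..T}. 0 \<le> u t"
    using pos by (simp add: less_imp_le)
  moreover have "\<exists>t\<in>{0..T}. u t \<noteq> 0"
    using pos[of 0] T_pos by (intro bexI[of _ 0]) auto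
  ultimately show ?thesis
    unfolding pos_solution_def by blast
qed

lemma supnorm_shooting_zero:
  assumes "nonneg_continuous g" "shooting_sol g c u" "bc_defect u = 0" "0 < c"
  shows "supnorm T u = c"
proof -
  have "\<bar>u t\<bar> \<le> \<bar>u 0\<bar>" if "t \<in> {0..T}" for t
    using shooting_sol_pos[OF assms(2,1,3,4) that] shooting_sol_le_start[OF assms(2,1) that]
      shooting_sol_start[OF assms(2,1)] assms(4) by simp
  then show ?thesis
    using supnorm_eq_max[of 0 T u] T_pos shooting_sol_start[OF assms(2,1)] assms(4) by simp
qed

lemma a_pos_before_end:
  assumes "\<exists>t0\<in>{0..T}. 0 < a t0"
  obtains t0 where "t0 \<in> {0..<T}" "0 < a t0"
proof (cases "0 < a T")
  case True
  have "(a \<longlongrightarrow> a T) (at T within {0..T})"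
    using a_cont T_pos by (simp add: continuous_on_def)
  then have "(a \<longlongrightarrow> a T) (at_left T)"
    by (simp add: at_within_Icc_at_left[OF T_pos])
  from order_tendstoD(1)[OF this True] eventually_at_left_real[OF T_pos]
  have "eventually (\<lambda>t. 0 < a t \<and> t \<in> {0<..<T}) (at_left T)"
    by eventually_elim auto
  then obtain t where "0 < a t" "t \<in> {0<..<T}"
    using eventually_happens'[OF trivial_limit_at_left_real] by blast
  then show ?thesis
    by (intro that[of t]) auto
next
  case False
  obtain t0 where "t0 \<in> {0..T}" "0 < a t0"
    using assms by blast
  moreover from False this have "t0 \<noteq> T" by auto
  ultimately show ?thesis
    by (intro that[of t0]) auto
qed

lemma load_integral_pos:
  assumes "\<exists>t0\<in>{0..T}. 0 < a t0"
  shows "0 < load_integral"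
proof -
  obtain t0 where t0: "t0 \<in> {0..<T}" "0 < a t0"
    using a_pos_before_end[OF assms] by blast
  let ?k = "\<lambda>s. 2 * (T - \<eta>) + \<alpha> * (\<eta>^2 - s^2)"
  have k_pos: "0 < ?k s" if "s \<in> {0..\<eta>}" for s
  proof -
    have "s^2 \<le> \<eta>^2" using that by (intro power_mono) auto
    then show ?thesis using eta alpha by (simp add: add_pos_nonneg)
  qed
  have cont: "continuous_on {l..r} (\<lambda>s. p s * a s)" if "continuous_on {l..r} p" "0 \<le> l" "r \<le> T"
    for p :: "real \<Rightarrow> real" and l r
    using that by (intro continuous_on_mult continuous_on_subinterval[OF a_cont])
  have I1: "0 \<le> integral {\<eta>..T} (\<lambda>s. (T - s) * a s)"
    using eta a_nonneg by (intro integral_nonneg integrable_continuous_real cont continuous_intros) auto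
  have I2: "0 \<le> integral {0..\<eta>} (\<lambda>s. ?k s * a s)"
  proof (intro integral_nonneg integrable_continuous_real cont continuous_intros)
    fix s assume "s \<in> {0..\<eta>}"
    with k_pos[of s] a_nonneg[of s] eta show "0 \<le> ?k s * a s" by simp
  qed (use eta in auto)
  show ?thesis
  proof (cases "t0 \<le> \<eta>")
    case True
    have "0 < integral {0..\<eta>} (\<lambda>s. ?k s * a s)"
    proof (rule integral_pos_of_pos_point[of _ _ _ t0])
      show "0 \<le> ?k s * a s" if "s \<in> {0..\<eta>}" for s
        using k_pos[OF that] a_nonneg[of s] that eta by simp
      show "0 < ?k t0 * a t0"
        using k_pos[of t0] True t0 by simp
    qed (use eta True t0 in \<open>auto intro!: continuous_intros continuous_on_subinterval[OF a_cont]\<close>)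
    with I1 show ?thesis unfolding load_integral_def by simp
  next
    case False
    have "0 < integral {\<eta>..T} (\<lambda>s. (T - s) * a s)"
    proof (rule integral_pos_of_pos_point[of _ _ _ t0])
      show "0 \<le> (T - s) * a s" if "s \<in> {\<eta>..T}" for s
        using a_nonneg[of s] that eta by simp
    qed (use eta False t0 in \<open>auto intro!: continuous_intros continuous_on_subinterval[OF a_cont]\<close>)
    with I2 show ?thesis unfolding load_integral_def by simp
  qed
qed

lemma small_slope_exists:
  obtains \<epsilon> where "0 < \<epsilon>" "2 * (T * T * a_max * \<epsilon>) \<le> 1 - \<alpha> * \<eta>"
proof
  define \<epsilon> where "\<epsilon> = (1 - \<alpha> * \<eta>) / (2 * (T * T * a_max + 1))"
  have "0 \<le> T * T * a_max"
    using a_max_nonneg by simp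
  then show "0 < \<epsilon>"
    using alpha by (simp add: \<epsilon>_def)
  have "2 * (T * T * a_max * \<epsilon>) = (1 - \<alpha> * \<eta>) * (T * T * a_max / (T * T * a_max + 1))"
    using \<open>0 \<le> T * T * a_max\<close> by (simp add: \<epsilon>_def field_simps)
  also have "\<dots> \<le> 1 - \<alpha> * \<eta>"
    using \<open>0 \<le> T * T * a_max\<close> alpha by (intro mult_left_le) auto
  finally show "2 * (T * T * a_max * \<epsilon>) \<le> 1 - \<alpha> * \<eta>" .
qed

lemma bc_defect_pos_near_0:
  assumes f: "nonneg_continuous f" and f0: "((\<lambda>u. f u / u) \<longlongrightarrow> 0) (at_right 0)" and "0 < r"
  obtains lo where "0 < lo" "lo < r"
    "\<And>g u. nonneg_continuous g \<Longrightarrow> (\<And>x. x \<in> {0..lo} \<Longrightarrow> g x \<le> f x) \<Longrightarrow> shooting_sol g lo u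
       \<Longrightarrow> 0 < bc_defect u"
proof -
  obtain \<epsilon> where \<epsilon>: "0 < \<epsilon>" "2 * (T * T * a_max * \<epsilon>) \<le> 1 - \<alpha> * \<eta>"
    by (rule small_slope_exists)
  obtain \<delta> where \<delta>: "0 < \<delta>" "\<And>x. 0 < x \<Longrightarrow> x < \<delta> \<Longrightarrow> f x \<le> \<epsilon> * x"
    using eventually_le_of_ratio_tendsto_0[OF f0 eventually_at_right_less \<epsilon>(1)]
    unfolding eventually_at_right_field by auto
  define lo where "lo = min (\<delta> / 2) (r / 2)"
  have lo: "0 < lo" "lo < r" "lo < \<delta>"
    using \<delta>(1) \<open>0 < r\<close> by (auto simp: lo_def)
  have f_le: "f x \<le> \<epsilon> * lo" if "x \<in> {0..lo}" for x
  proof (cases "x = 0")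
    case True
    then show ?thesis
      using zero_of_ratio_tendsto_0[OF _ f0] f lo \<epsilon> by (simp add: nonneg_continuous_def)
  next
    case False
    then have "f x \<le> \<epsilon> * x" using that lo by (intro \<delta>(2)) auto
    also have "\<dots> \<le> \<epsilon> * lo" using that \<epsilon> by (intro mult_left_mono) auto
    finally show ?thesis .
  qed
  have small: "T * T * a_max * (\<epsilon> * lo) < lo * (1 - \<alpha> * \<eta>)"
    using \<epsilon> lo alpha mult_strict_right_mono[of "T * T * a_max * \<epsilon>" "1 - \<alpha> * \<eta>" lo] by simp
  show ?thesis
  proof (rule that[OF lo(1,2)])
    fix g u assume g: "nonneg_continuous g" and below: "\<And>x. x \<in> {0..lo} \<Longrightarrow> g x \<le> f x"
      and sol: "shooting_sol g lo u"
    show "0 < bc_defect u"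
      using lo(1) below f_le order_trans by (intro bc_defect_pos[OF sol g _ _ small]) fastforce+
  qed
qed

lemma bc_defect_pos_near_infinity:
  assumes f: "nonneg_continuous f" and f_inf: "((\<lambda>u. f u / u) \<longlongrightarrow> 0) at_top"
  obtains R where "r < R"
    "\<And>g u. nonneg_continuous g \<Longrightarrow> (\<And>x. x \<in> {0..R} \<Longrightarrow> g x \<le> f x) \<Longrightarrow> shooting_sol g R u
       \<Longrightarrow> 0 < bc_defect u"
proof -
  obtain \<epsilon> where \<epsilon>: "0 < \<epsilon>" "2 * (T * T * a_max * \<epsilon>) \<le> 1 - \<alpha> * \<eta>"
    by (rule small_slope_exists)
  obtain X where X: "\<And>x. X \<le> x \<Longrightarrow> f x \<le> \<epsilon> * x"
    using eventually_le_of_ratio_tendsto_0[OF f_inf eventually_gt_at_top \<epsilon>(1)]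
    unfolding eventually_at_top_linorder by auto
  have f_cont: "continuous_on {0..max X 0} f"
    using f unfolding nonneg_continuous_def by (auto intro: continuous_on_subset)
  obtain M where M: "\<And>x. x \<in> {0..max X 0} \<Longrightarrow> f x \<le> M"
    using compact_attains_sup[OF compact_continuous_image[OF f_cont compact_Icc]] by fastforce
  have "0 \<le> f 0"
    using f by (simp add: nonneg_continuous_def)
  with M[of 0] have "0 \<le> M"
    by simp
  have f_le: "f x \<le> \<epsilon> * x + M" if "0 \<le> x" for x
  proof (cases "X \<le> x")
    case True
    then have "f x \<le> \<epsilon> * x" by (rule X)
    with \<open>0 \<le> M\<close> show ?thesis by linarith
  next
    case False
    with that have "x \<in> {0..max X 0}" by auto
    then have "f x \<le> M" by (rule M)
    moreover have "0 \<le> \<epsilon> * x" using \<epsilon>(1) that by simp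
    ultimately show ?thesis by linarith
  qed
  define Q where "Q = 2 * (T * T * a_max * M) / (1 - \<alpha> * \<eta>)"
  define R where "R = max r 0 + Q + 1"
  have "0 \<le> T * T * a_max * M"
    using a_max_nonneg \<open>0 \<le> M\<close> by simp
  then have "0 \<le> Q" "Q * (1 - \<alpha> * \<eta>) = 2 * (T * T * a_max * M)"
    using alpha by (simp_all add: Q_def)
  moreover have "0 < (max r 0 + 1) * (1 - \<alpha> * \<eta>)"
    using alpha by (intro mult_pos_pos) auto
  ultimately have R: "r < R" "0 \<le> R" "2 * (T * T * a_max * M) < R * (1 - \<alpha> * \<eta>)"
    by (auto simp: R_def distrib_right)
  have "T * T * a_max * (\<epsilon> * R) \<le> R * (1 - \<alpha> * \<eta>) / 2"
    using mult_right_mono[OF \<epsilon>(2) R(2)] by (simp add: mult_ac)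
  then have small: "T * T * a_max * (\<epsilon> * R + M) < R * (1 - \<alpha> * \<eta>)"
    using R(3) by (simp add: distrib_left)
  show ?thesis
  proof (rule that[OF R(1)])
    fix g u assume g: "nonneg_continuous g" and below: "\<And>x. x \<in> {0..R} \<Longrightarrow> g x \<le> f x"
      and sol: "shooting_sol g R u"
    have "g x \<le> \<epsilon> * R + M" if "x \<in> {0..R}" for x
    proof -
      have "\<epsilon> * x \<le> \<epsilon> * R" using that \<epsilon>(1) by (intro mult_left_mono) auto
      with below[OF that] f_le[of x] that show ?thesis by simp
    qed
    then show "0 < bc_defect u"
      by (rule bc_defect_pos[OF sol g R(2) _ small])
  qed
qed

lemma bc_defect_neg_near_level:
  assumes "0 < \<rho>" "0 < load_integral" and M: "1 - \<alpha> * \<eta> \<le> M * (gam T \<eta> \<alpha> * load_integral)"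
    and f_ge: "\<And>x. x \<in> {gam T \<eta> \<alpha> * \<rho>..\<rho>} \<Longrightarrow> M * \<rho> \<le> f x"
  obtains e where "0 < e"
    "\<And>g u. nonneg_continuous g \<Longrightarrow> (\<And>x. x \<in> {gam T \<eta> \<alpha> * \<rho>..\<rho>} \<Longrightarrow> f x - e \<le> g x)
       \<Longrightarrow> shooting_sol g \<rho> u \<Longrightarrow> bc_defect u < 0"
proof -
  have "0 < gam T \<eta> \<alpha> * (M * load_integral)"
    using M alpha by (simp add: mult.left_commute)
  then have "0 < M * load_integral"
    using gam_pos by (simp add: zero_less_mult_iff)
  from mult_strict_right_mono[OF gam_less_1 this]
  have "M * (gam T \<eta> \<alpha> * load_integral) < M * load_integral"
    by (simp add: mult_ac)
  with M have slack: "\<rho> * (1 - \<alpha> * \<eta>) < \<rho> * (M * load_integral)"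
    using \<open>0 < \<rho>\<close> by simp
  define e where "e = (\<rho> * (M * load_integral) - \<rho> * (1 - \<alpha> * \<eta>)) / (2 * load_integral)"
  define m where "m = M * \<rho> - e"
  have "m * load_integral = (\<rho> * (M * load_integral) + \<rho> * (1 - \<alpha> * \<eta>)) / 2"
    using assms(2) by (simp add: m_def e_def field_simps)
  then have m_slack: "\<rho> * (1 - \<alpha> * \<eta>) < m * load_integral"
    using slack by simp
  moreover have "0 \<le> \<rho> * (1 - \<alpha> * \<eta>)"
    using \<open>0 < \<rho>\<close> alpha by simp
  ultimately have "0 < m * load_integral"
    by linarith
  then have "0 \<le> m"
    using assms(2) by (auto simp: zero_less_mult_iff)
  show ?thesis
  proof (rule that)
    show "0 < e"
      using slack assms(2) by (simp add: e_def)
    fix g u assume g: "nonneg_continuous g" and above: "\<And>x. x \<in> {gam T \<eta> \<alpha> * \<rho>..\<rho>} \<Longrightarrow> f x - e \<le> g x"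
      and sol: "shooting_sol g \<rho> u"
    have "m \<le> g x" if "x \<in> {gam T \<eta> \<alpha> * \<rho>..\<rho>}" for x
      using above[OF that] f_ge[OF that] by (simp add: m_def)
    then show "bc_defect u < 0"
      by (rule bc_defect_neg[OF sol g \<open>0 < \<rho>\<close> \<open>0 \<le> m\<close> _ m_slack])
  qed
qed

lemma shooting_zero_between:
  assumes f: "nonneg_continuous f" and lo: "0 \<le> lo" "lo \<le> hi" "hi \<le> R"
    and sign: "\<And>n u v. N \<le> n \<Longrightarrow> shooting_sol (inf_convolution f R n) lo u
      \<Longrightarrow> shooting_sol (inf_convolution f R n) hi v \<Longrightarrow> bc_defect u * bc_defect v \<le> 0"
  shows "\<exists>c\<in>{lo..hi}. \<exists>u. shooting_sol f c u \<and> bc_defect u = 0"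
proof (rule shooting_zero_limit[OF f lo])
  have R: "0 \<le> R" and f_nonneg: "\<And>y. y \<in> {0..R} \<Longrightarrow> 0 \<le> f y"
    using f lo by (auto simp: nonneg_continuous_def)
  show "\<exists>c\<in>{lo..hi}. \<exists>u. shooting_sol (inf_convolution f R n) c u \<and> bc_defect u = 0" if "N \<le> n" for n
    by (rule shooting_zero_exists[OF nonneg_continuous_inf_convolution[where f = f and R = R, OF R f_nonneg]
          lipschitz_on_inf_convolution[where f = f and R = R, OF R f_nonneg] lo(2) sign[OF that]])
qed

theorem two_shooting_zeros:
  assumes f: "nonneg_continuous f" and f0: "((\<lambda>u. f u / u) \<longlongrightarrow> 0) (at_right 0)"
    and f_inf: "((\<lambda>u. f u / u) \<longlongrightarrow> 0) at_top"
    and \<rho>: "0 < \<rho>" and load: "0 < load_integral"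
    and M: "1 - \<alpha> * \<eta> \<le> M * (gam T \<eta> \<alpha> * load_integral)"
    and f_ge: "\<And>x. x \<in> {gam T \<eta> \<alpha> * \<rho>..\<rho>} \<Longrightarrow> M * \<rho> \<le> f x"
  obtains c1 u1 c2 u2 where "shooting_sol f c1 u1" "bc_defect u1 = 0" "0 < c1" "c1 < \<rho>"
    "shooting_sol f c2 u2" "bc_defect u2 = 0" "\<rho> < c2"
proof -
  obtain e where e: "0 < e" and neg: "\<And>g u. nonneg_continuous g
      \<Longrightarrow> (\<And>x. x \<in> {gam T \<eta> \<alpha> * \<rho>..\<rho>} \<Longrightarrow> f x - e \<le> g x) \<Longrightarrow> shooting_sol g \<rho> u \<Longrightarrow> bc_defect u < 0"
    using bc_defect_neg_near_level[where f = f, OF \<rho> load M f_ge] by blast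
  obtain lo where lo: "0 < lo" "lo < \<rho>" and pos_lo: "\<And>g u. nonneg_continuous g
      \<Longrightarrow> (\<And>x. x \<in> {0..lo} \<Longrightarrow> g x \<le> f x) \<Longrightarrow> shooting_sol g lo u \<Longrightarrow> 0 < bc_defect u"
    using bc_defect_pos_near_0[OF f f0 \<rho>] by blast
  obtain R where R: "\<rho> < R" and pos_R: "\<And>g u. nonneg_continuous g
      \<Longrightarrow> (\<And>x. x \<in> {0..R} \<Longrightarrow> g x \<le> f x) \<Longrightarrow> shooting_sol g R u \<Longrightarrow> 0 < bc_defect u"
    using bc_defect_pos_near_infinity[OF f f_inf] by blast
  have R0: "0 \<le> R" and f_nonneg: "\<And>y. y \<in> {0..R} \<Longrightarrow> 0 \<le> f y" and f_cont: "continuous_on {0..R} f"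
    using f R \<rho> by (auto simp: nonneg_continuous_def intro: continuous_on_subset)
  let ?g = "inf_convolution f R"
  obtain N where N: "\<And>n x. N \<le> n \<Longrightarrow> x \<in> {0..R} \<Longrightarrow> f x - e \<le> ?g n x"
    using inf_convolution_uniform_approx[where f = f and R = R, OF R0 f_nonneg f_cont e] by blast
  note g = nonneg_continuous_inf_convolution[where f = f and R = R, OF R0 f_nonneg]
  note g_le = inf_convolution_le[where f = f and R = R, OF R0 f_nonneg]
  have "0 \<le> gam T \<eta> \<alpha> * \<rho>"
    using gam_pos \<rho> by simp
  then have neg_g: "bc_defect v < 0" if "N \<le> n" "shooting_sol (?g n) \<rho> v" for n v
    using R that by (intro neg[OF g]) (auto intro: N)
  have pos_lo_g: "0 < bc_defect u" if "shooting_sol (?g n) lo u" for n u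
    by (rule pos_lo[OF g _ that]) (use lo R in \<open>auto intro!: g_le\<close>)
  have pos_R_g: "0 < bc_defect u" if "shooting_sol (?g n) R u" for n u
    using that by (intro pos_R[OF g] g_le)
  have sign_lo: "bc_defect u * bc_defect v \<le> 0"
    if "N \<le> n" "shooting_sol (?g n) lo u" "shooting_sol (?g n) \<rho> v" for n u v
    using pos_lo_g[OF that(2)] neg_g[OF that(1,3)] by (simp add: mult_pos_neg less_imp_le)
  have sign_R: "bc_defect u * bc_defect v \<le> 0"
    if "N \<le> n" "shooting_sol (?g n) \<rho> u" "shooting_sol (?g n) R v" for n u v
    using neg_g[OF that(1,2)] pos_R_g[OF that(3)] by (simp add: mult_neg_pos less_imp_le)
  have "\<exists>c\<in>{lo..\<rho>}. \<exists>u. shooting_sol f c u \<and> bc_defect u = 0"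
    using lo R by (intro shooting_zero_between[OF f] sign_lo) auto
  then obtain c1 u1 where 1: "c1 \<in> {lo..\<rho>}" "shooting_sol f c1 u1" "bc_defect u1 = 0"
    by blast
  have "\<exists>c\<in>{\<rho>..R}. \<exists>u. shooting_sol f c u \<and> bc_defect u = 0"
    using \<rho> R by (intro shooting_zero_between[OF f] sign_R) auto
  then obtain c2 u2 where 2: "c2 \<in> {\<rho>..R}" "shooting_sol f c2 u2" "bc_defect u2 = 0"
    by blast
  have not_level: "c \<noteq> \<rho>" if sol: "shooting_sol f c u" and "bc_defect u = 0" for c u
  proof
    assume "c = \<rho>"
    with sol e have "bc_defect u < 0"
      by (intro neg[OF f]) auto
    with \<open>bc_defect u = 0\<close> show False by simp
  qed
  from not_level[OF 1(2,3)] not_level[OF 2(2,3)] 1 2 lo show ?thesis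
    by (intro that[of c1 u1 c2 u2]) auto
qed

end

theorem theorem4p2:
  fixes T \<eta> \<alpha> \<rho>2 M2 :: real and f a :: "real \<Rightarrow> real"
  assumes "T > 0" and "0 < \<eta>" and "\<eta> < T" and "0 < \<alpha>" and "\<alpha> < 1 / \<eta>"
    and "continuous_on {0..} f" and "\<forall>u\<ge>0. f u \<ge> 0"
    and "continuous_on {0..T} a" and "\<forall>t\<in>{0..T}. a t \<ge> 0"
    and "\<exists>t0\<in>{0..T}. a t0 > 0"
    and "((\<lambda>u. f u / u) \<longlongrightarrow> 0) (at_right 0)"
    and "((\<lambda>u. f u / u) \<longlongrightarrow> 0) at_top"
    and "\<rho>2 > 0" and "M2 \<ge> Lambda2 T \<eta> \<alpha> a"
    and "\<forall>u\<in>{gam T \<eta> \<alpha> * \<rho>2..\<rho>2}. f u \<ge> M2 * \<rho>2"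
  shows "\<exists>u1 u2. pos_solution T \<eta> \<alpha> a f u1 \<and> pos_solution T \<eta> \<alpha> a f u2 \<and>
           0 < supnorm T u1 \<and> supnorm T u1 < \<rho>2 \<and> \<rho>2 < supnorm T u2"
proof -
  have "\<alpha> * \<eta> < 1"
    using assms(2,5) by (simp add: less_divide_eq)
  then interpret integral_bvp T \<eta> \<alpha> a
    using assms(1-4,8,9) by unfold_locales auto
  have f: "nonneg_continuous f"
    using assms(6,7) by (simp add: nonneg_continuous_def)
  have load: "0 < load_integral"
    by (rule load_integral_pos[OF assms(10)])
  have "Lambda2 T \<eta> \<alpha> a = (1 - \<alpha> * \<eta>) / (gam T \<eta> \<alpha> * load_integral)"
    unfolding Lambda2_def load_integral_def by simp
  with assms(14) gam_pos load have M: "1 - \<alpha> * \<eta> \<le> M2 * (gam T \<eta> \<alpha> * load_integral)"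
    by (simp add: pos_divide_le_eq)
  have f_ge: "\<And>x. x \<in> {gam T \<eta> \<alpha> * \<rho>2..\<rho>2} \<Longrightarrow> M2 * \<rho>2 \<le> f x"
    using assms(15) by blast
  obtain c1 u1 c2 u2 where "shooting_sol f c1 u1" "bc_defect u1 = 0" "0 < c1" "c1 < \<rho>2"
    "shooting_sol f c2 u2" "bc_defect u2 = 0" "\<rho>2 < c2"
    using two_shooting_zeros[where f = f, OF f assms(11,12,13) load M f_ge] by blast
  with f assms(13) show ?thesis
    by (intro exI[of _ u1] exI[of _ u2])
       (simp add: pos_solution_of_shooting_zero supnorm_shooting_zero)
qed

end
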